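(* If the cell is $1$-controllable, then there exists an admissible path from $\partial\Gamma_{\rm L}$ to $\partial\Gamma_{\rm R}$ whose end points are the centers $(0,0)$ and $(L,0)$ of the two openings and whose first and last straight segments are orthogonal to the openings (i.e. horizontal).
   Context: Cell geometry. Let $\Gamma_{\rm box}\subset\mathbb{R}^2$ be a bounded connected closed domain such that $(x,y)\in\Gamma_{\rm box}$ implies $x\in[0,L]$. Its boundary is $\partial\Gamma_{\rm box}=\partial\Gamma_{\rm L}\cup\partial\Gamma_{\rm R}\cup\bigcup_{k=1}^b\partial\Gamma_k$, where $\partial\Gamma_{\rm L}=\{(0,y):y\in[-a,a]\}$ and $\partial\Gamma_{\rm R}=\{(L,y):y\in[-a,a]\}$ are the two "openings" ($a>0$), and each $\partial\Gamma_k$ is an arc of a circle $C_k$ with center $c_k$, the arcs being oriented so that $\partial\Gamma_{\rm box}$ is everywhere dispersing. In the interior of $\Gamma_{\rm box}$ lies a closed disk $D$ of center $c=(L/2,0)$ and radius $r$ with $\partial D\cap\partial\Gamma_{\rm box}=\emptyset$, and for every $z\in\partial\Gamma_{\rm box}$ the segment $[c,z]$ meets $\partial\Gamma_{\rm box}$ only at $z$. The cell is $\Gamma=\Gamma_{\rm box}\setminus D$; its corners $\partial\Gamma^*$ are the points where two boundary pieces meet. Illumination and 1-controllability. For $k\in\{1,\dots,b\}$, let $I_k\subset\partial D$ be the largest open connected set of points $\theta\in\partial D$ such that a straight line leaving $\theta$ in some direction $\alpha_k(\theta)$ returns to $\theta$ after exactly one (specular) reflection, occurring on $\partial\Gamma_k$;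 equivalently, $I_k$ is the part of $\partial D$ illuminated by light emitted from $c_k$ passing only through the arc $\partial\Gamma_k$. The cell is $1$-controllable if $\bigcup_{k=1}^b I_k=\partial D$. Admissible path. A curve $\gamma:[0,1]\to\Gamma$, continuous and piecewise differentiable on $(0,1)$, is admissible if: (1) it consists of finitely many straight segments meeting at $\partial\Gamma=\partial\Gamma_{\rm box}\cup\partial D$; (2) at each meeting point on $\partial\Gamma_{\rm box}$ the incoming and outgoing angles are equal; (3) only $\gamma(0)$ and $\gamma(1)$ may lie in $\partial\Gamma_{\rm L}\cup\partial\Gamma_{\rm R}$; (4) $\gamma$ never meets a corner of $\partial\Gamma^*$; (5) $\gamma$ is nowhere tangent to $\partial D$. No reflection law is required at meeting points on $\partial D$. *)

theory Defs
  imports "HOL-Analysis.Analysis"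
begin

type_synonym pt = "real \<times> real"

definition opening_L :: "real \<Rightarrow> pt set" where
  "opening_L a = {(0, y) | y. -a \<le> y \<and> y \<le> a}"

definition opening_R :: "real \<Rightarrow> real \<Rightarrow> pt set" where
  "opening_R L a = {(L, y) | y. -a \<le> y \<and> y \<le> a}"

definition piece :: "real \<Rightarrow> real \<Rightarrow> nat \<Rightarrow> (nat \<Rightarrow> pt set) \<Rightarrow> nat \<Rightarrow> pt set" where
  "piece L a b A i = (if i = 0 then opening_L a else if i = b + 1 then opening_R L a else A i)"

definition corners :: "real \<Rightarrow> real \<Rightarrow> nat \<Rightarrow> (nat \<Rightarrow> pt set) \<Rightarrow> pt set" where
  "corners L a b A = {z. \<exists>i\<in>{0..b+1}. \<exists>j\<in>{0..b+1}. i \<noteq> j \<and> z \<in> piece L a b A i \<and> z \<in> piece L a b A j}"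

definition reflect :: "pt \<Rightarrow> pt \<Rightarrow> pt" where
  "reflect w v = v - (2 * (v \<bullet> w) / (w \<bullet> w)) *\<^sub>R w"

definition disk_center :: "real \<Rightarrow> pt" where
  "disk_center L = (L / 2, 0)"

text \<open>The cell: box minus the (closed) disk D, i.e. box minus the open disk of the same radius
  together with its boundary circle.\<close>
definition cell :: "pt set \<Rightarrow> real \<Rightarrow> real \<Rightarrow> pt set" where
  "cell Gbox L r = Gbox - ball (disk_center L) r"

definition cell_boundary :: "pt set \<Rightarrow> real \<Rightarrow> real \<Rightarrow> pt set" where
  "cell_boundary Gbox L r = frontier Gbox \<union> sphere (disk_center L) r"

definition is_cell :: "real \<Rightarrow> real \<Rightarrow> real \<Rightarrow> nat \<Rightarrow> (nat \<Rightarrow> pt) \<Rightarrow> (nat \<Rightarrow> real)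
    \<Rightarrow> (nat \<Rightarrow> pt set) \<Rightarrow> pt set \<Rightarrow> bool" where
  "is_cell L a r b cc R A Gbox \<longleftrightarrow>
     0 < L \<and> 0 < a \<and> 0 < r \<and>
     bounded Gbox \<and> closed Gbox \<and> connected Gbox \<and>
     connected (interior Gbox) \<and> closure (interior Gbox) = Gbox \<and>
     (\<forall>x y. (x, y) \<in> Gbox \<longrightarrow> 0 \<le> x \<and> x \<le> L) \<and>
     frontier Gbox = opening_L a \<union> opening_R L a \<union> (\<Union>k\<in>{1..b}. A k) \<and>
     (\<forall>k\<in>{1..b}. 0 < R k \<and>
        (\<exists>t1 t2. t1 < t2 \<and> t2 - t1 < 2 * pi \<and>
           A k = (\<lambda>t. cc k + R k *\<^sub>R (cos t, sin t)) ` {t1..t2}) \<and>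
        \<comment> \<open>dispersing: near the arc the box lies outside the circle C_k\<close>
        (\<forall>z\<in>A k. \<exists>e>0. \<forall>w\<in>Gbox. dist w z < e \<longrightarrow> R k \<le> dist w (cc k))) \<and>
     cball (disk_center L) r \<subseteq> interior Gbox \<and>
     cball (disk_center L) r \<inter> frontier Gbox = {} \<and>
     (\<forall>z\<in>frontier Gbox. closed_segment (disk_center L) z \<inter> frontier Gbox = {z})"

text \<open>theta on the circle of D: a straight line leaving theta returns to theta after exactly one
  specular reflection, occurring on the arc k (at a non-corner point z).\<close>
definition returns_after_one_reflection ::
  "real \<Rightarrow> real \<Rightarrow> real \<Rightarrow> nat \<Rightarrow> (nat \<Rightarrow> pt) \<Rightarrow> (nat \<Rightarrow> pt set) \<Rightarrow> pt set \<Rightarrow> nat \<Rightarrow> pt \<Rightarrow> bool" where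
  "returns_after_one_reflection L a r b cc A Gbox k \<theta> \<longleftrightarrow>
     (\<exists>z\<in>A k. z \<notin> corners L a b A \<and> z \<noteq> \<theta> \<and>
        open_segment \<theta> z \<subseteq> cell Gbox L r - cell_boundary Gbox L r \<and>
        (\<exists>s>0. \<theta> - z = s *\<^sub>R reflect (z - cc k) (z - \<theta>)))"

definition return_set ::
  "real \<Rightarrow> real \<Rightarrow> real \<Rightarrow> nat \<Rightarrow> (nat \<Rightarrow> pt) \<Rightarrow> (nat \<Rightarrow> pt set) \<Rightarrow> pt set \<Rightarrow> nat \<Rightarrow> pt set" where
  "return_set L a r b cc A Gbox k =
     {\<theta> \<in> sphere (disk_center L) r. returns_after_one_reflection L a r b cc A Gbox k \<theta>}"

text \<open>I_k: the largest (relatively) open connected subset of the circle of D consisting of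
  such points (empty if there is no largest one).\<close>
definition illuminated ::
  "real \<Rightarrow> real \<Rightarrow> real \<Rightarrow> nat \<Rightarrow> (nat \<Rightarrow> pt) \<Rightarrow> (nat \<Rightarrow> pt set) \<Rightarrow> pt set \<Rightarrow> nat \<Rightarrow> pt set" where
  "illuminated L a r b cc A Gbox k =
     (let S = return_set L a r b cc A Gbox k; T = top_of_set (sphere (disk_center L) r) in
      \<Union>{U. openin T U \<and> connected U \<and> U \<subseteq> S \<and>
            (\<forall>V. openin T V \<and> connected V \<and> V \<subseteq> S \<longrightarrow> V \<subseteq> U)})"

definition one_controllable ::
  "real \<Rightarrow> real \<Rightarrow> real \<Rightarrow> nat \<Rightarrow> (nat \<Rightarrow> pt) \<Rightarrow> (nat \<Rightarrow> pt set) \<Rightarrow> pt set \<Rightarrow> bool" where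
  "one_controllable L a r b cc A Gbox \<longleftrightarrow>
     (\<Union>k\<in>{1..b}. illuminated L a r b cc A Gbox k) = sphere (disk_center L) r"

definition tangent_to_disk :: "real \<Rightarrow> real \<Rightarrow> pt \<Rightarrow> pt \<Rightarrow> bool" where
  "tangent_to_disk L r p q \<longleftrightarrow>
     (\<exists>x\<in>closed_segment p q. dist x (disk_center L) = r \<and> (q - p) \<bullet> (x - disk_center L) = 0)"

text \<open>Admissible path, given by its vertices p 0, ..., p n (the curve is the polygonal line
  through them, the straight segments meeting at the points p 1, ..., p (n-1)).\<close>
definition admissible_path ::
  "real \<Rightarrow> real \<Rightarrow> real \<Rightarrow> nat \<Rightarrow> (nat \<Rightarrow> pt) \<Rightarrow> (nat \<Rightarrow> pt set) \<Rightarrow> pt set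
     \<Rightarrow> (nat \<Rightarrow> pt) \<Rightarrow> nat \<Rightarrow> bool" where
  "admissible_path L a r b cc A Gbox p n \<longleftrightarrow>
     1 \<le> n \<and>
     (\<forall>i<n. p i \<noteq> p (Suc i) \<and> closed_segment (p i) (p (Suc i)) \<subseteq> cell Gbox L r) \<and>
     \<comment> \<open>(1) segments meet at the boundary of the cell\<close>
     (\<forall>i. 0 < i \<and> i < n \<longrightarrow> p i \<in> cell_boundary Gbox L r) \<and>
     \<comment> \<open>(2) specular reflection at meeting points on the boundary of the box\<close>
     (\<forall>i. 0 < i \<and> i < n \<and> p i \<in> frontier Gbox \<longrightarrow>
        (\<exists>k\<in>{1..b}. p i \<in> A k \<and>
           (\<exists>s>0. p (Suc i) - p i = s *\<^sub>R reflect (p i - cc k) (p i - p (i - 1))))) \<and>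
     \<comment> \<open>(3) only the end points may lie in the openings\<close>
     (\<forall>i<n. \<forall>x\<in>closed_segment (p i) (p (Suc i)). x \<in> opening_L a \<union> opening_R L a \<longrightarrow>
        (i = 0 \<and> x = p 0) \<or> (i = n - 1 \<and> x = p n)) \<and>
     \<comment> \<open>(4) never meets a corner\<close>
     (\<forall>i<n. closed_segment (p i) (p (Suc i)) \<inter> corners L a b A = {}) \<and>
     \<comment> \<open>(5) nowhere tangent to the circle of D\<close>
     (\<forall>i<n. \<not> tangent_to_disk L r (p i) (p (Suc i)))"

end

theory Submission
  imports Defs
begin

text \<open>
  Every point of the circle of D lies in some illuminated arc I_k, i.e. in the interior of the
  set of points whose ray returns after one reflection on the arc k. Rotating \<theta> about the
  centre of D away from such a point \<theta>0 moves the foot of the returning ray continuously along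
  the arc, and the reflection law at that foot, for the pair of rays to \<theta>0 and to \<theta>, fails
  with opposite signs for small positive and negative rotation angles. By the intermediate
  value theorem every \<theta> close to \<theta>0 is therefore reached from \<theta>0 by one reflection on the
  arc (a bounce). The equivalence relation generated by bounces thus has open classes on the
  connected circle, so its two points on the horizontal axis are joined by a finite chain of
  bounces. Adding the horizontal segments from (0, 0) and to (L, 0) gives the admissible path;
  these avoid the corners because, by the dispersing condition, no arc passes through the centre
  of an opening.
\<close>

section \<open>Rotations, reflections and radial projections in the plane\<close>

definition cross :: "pt \<Rightarrow> pt \<Rightarrow> real" where
  "cross u v = fst u * snd v - snd u * fst v"

lemma cross_scaleR_left [simp]: "cross (c *\<^sub>R u) v = c * cross u v"
  and cross_scaleR_right [simp]: "cross u (c *\<^sub>R v) = c * cross u v"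
  and cross_add_right: "cross u (v + w) = cross u v + cross u w"
  and cross_diff_right: "cross u (v - w) = cross u v - cross u w"
  and cross_self [simp]: "cross u u = 0"
  by (simp_all add: cross_def algebra_simps)

lemma cross_eq_0_imp_parallel:
  assumes "n \<noteq> 0" "cross n w = 0"
  shows "w = ((w \<bullet> n) / (n \<bullet> n)) *\<^sub>R n"
proof -
  obtain n1 n2 w1 w2 where nw: "n = (n1, n2)" "w = (w1, w2)" by (cases n, cases w)
  have h: "n1 * w2 - n2 * w1 = 0" using assms(2) by (simp add: cross_def nw)
  have "0 < n \<bullet> n" using assms(1) by simp
  then have N: "0 < n1 * n1 + n2 * n2" by (simp add: nw)
  have "w1 * (n1 * n1 + n2 * n2) = (w1 * n1 + w2 * n2) * n1"
    and "w2 * (n1 * n1 + n2 * n2) = (w1 * n1 + w2 * n2) * n2"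
    using h by algebra+
  then have "w1 = (w1 * n1 + w2 * n2) / (n1 * n1 + n2 * n2) * n1"
    and "w2 = (w1 * n1 + w2 * n2) / (n1 * n1 + n2 * n2) * n2"
    using N by (auto simp: divide_simps)
  then show ?thesis by (simp add: nw)
qed

definition rotate :: "real \<Rightarrow> pt \<Rightarrow> pt" where
  "rotate t v = (cos t * fst v - sin t * snd v, sin t * fst v + cos t * snd v)"

lemma rotate_0 [simp]: "rotate 0 v = v"
  by (simp add: rotate_def)

lemma norm_rotate [simp]: "norm (rotate t v) = norm v"
proof -
  have "(cos t * fst v - sin t * snd v)\<^sup>2 + (sin t * fst v + cos t * snd v)\<^sup>2
      = ((sin t)\<^sup>2 + (cos t)\<^sup>2) * ((fst v)\<^sup>2 + (snd v)\<^sup>2)"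
    by algebra
  then show ?thesis by (simp add: rotate_def norm_Pair norm_prod_def)
qed

lemma continuous_rotate [continuous_intros]: "isCont (\<lambda>t. rotate t v) t"
  unfolding rotate_def by (intro continuous_intros)

lemma inner_rotate: "d \<bullet> rotate t v = cos t * (d \<bullet> v) + sin t * cross v d"
  by (simp add: rotate_def cross_def inner_prod_def algebra_simps)

lemma cross_rotate_diff:
  "cross (rotate t v - d) (v - d) = (1 - cos t) * cross v d + sin t * (v \<bullet> (d - v))"
  by (simp add: rotate_def cross_def inner_prod_def algebra_simps)

lemma reflect_scaleR: "reflect w (c *\<^sub>R v) = c *\<^sub>R reflect w v"
  by (simp add: reflect_def algebra_simps)

lemma reflect_reflect:
  assumes "w \<noteq> 0" shows "reflect w (reflect w v) = v"
  using assms by (simp add: reflect_def inner_diff_left algebra_simps)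

lemma reflect_antiparallel_imp_parallel:
  assumes "0 < s" "- v = s *\<^sub>R reflect w v"
  shows "\<exists>\<kappa>. v = \<kappa> *\<^sub>R w"
proof -
  define m where "m = s * (2 * (v \<bullet> w) / (w \<bullet> w))"
  have "(1 + s) *\<^sub>R v = m *\<^sub>R w"
    using assms(2) unfolding reflect_def m_def by (simp add: algebra_simps)
  then have "(1 / (1 + s)) *\<^sub>R ((1 + s) *\<^sub>R v) = (m / (1 + s)) *\<^sub>R w" by simp
  then have "v = (m / (1 + s)) *\<^sub>R w" using assms(1) by simp
  then show ?thesis ..
qed

definition radial_proj :: "pt \<Rightarrow> real \<Rightarrow> pt \<Rightarrow> pt" where
  "radial_proj c \<rho> x = c + (\<rho> / dist x c) *\<^sub>R (x - c)"

lemma dist_radial_proj: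
  assumes "x \<noteq> c" "0 \<le> \<rho>" shows "dist (radial_proj c \<rho> x) c = \<rho>"
  using assms by (simp add: radial_proj_def dist_norm)

lemma radial_proj_minus:
  "radial_proj c \<rho> x - x = (1 - \<rho> / dist x c) *\<^sub>R (c - x)"
  by (simp add: radial_proj_def algebra_simps)

lemma radial_proj_inner_pos:
  assumes "0 < \<rho>" "\<rho> < dist x c"
  shows "0 < (x - radial_proj c \<rho> x) \<bullet> (radial_proj c \<rho> x - c)"
proof -
  define \<kappa> where "\<kappa> = \<rho> / dist x c"
  have "0 < dist x c" using assms by linarith
  then have "0 < \<kappa>" "\<kappa> < 1" "x \<noteq> c"
    using assms by (auto simp: \<kappa>_def field_simps)
  have "x - radial_proj c \<rho> x = (1 - \<kappa>) *\<^sub>R (x - c)"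
    using radial_proj_minus[of c \<rho> x] by (simp add: \<kappa>_def algebra_simps)
  moreover have "radial_proj c \<rho> x - c = \<kappa> *\<^sub>R (x - c)"
    by (simp add: radial_proj_def \<kappa>_def)
  ultimately have "(x - radial_proj c \<rho> x) \<bullet> (radial_proj c \<rho> x - c)
      = ((1 - \<kappa>) * \<kappa>) * ((x - c) \<bullet> (x - c))"
    by simp
  also have "\<dots> > 0"
    using \<open>0 < \<kappa>\<close> \<open>\<kappa> < 1\<close> \<open>x \<noteq> c\<close> by (intro mult_pos_pos) auto
  finally show ?thesis .
qed

lemma isCont_radial_proj [continuous_intros]:
  assumes "isCont f t" "f t \<noteq> c"
  shows "isCont (\<lambda>t. radial_proj c \<rho> (f t)) t"
  using assms unfolding radial_proj_def by (intro continuous_intros) auto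

text \<open>For a point z on a circle with centre c, this is the sine of the angle between the
  outward normal z - c and the ray from z towards \<theta>, scaled by the radius.\<close>
definition normal_sine :: "pt \<Rightarrow> pt \<Rightarrow> pt \<Rightarrow> real" where
  "normal_sine c z \<theta> = cross (z - c) (\<theta> - z) / norm (\<theta> - z)"

lemma normal_sine_radial_proj:
  "normal_sine c (radial_proj c \<rho> x) \<theta>
     = \<rho> / dist x c / norm (\<theta> - radial_proj c \<rho> x) * cross (x - c) (\<theta> - c)"
proof -
  have e: "radial_proj c \<rho> x - c = (\<rho> / dist x c) *\<^sub>R (x - c)"
    "\<theta> - radial_proj c \<rho> x = (\<theta> - c) - (\<rho> / dist x c) *\<^sub>R (x - c)"
    by (simp_all add: radial_proj_def algebra_simps)
  have "cross (radial_proj c \<rho> x - c) (\<theta> - radial_proj c \<rho> x)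
      = \<rho> / dist x c * cross (x - c) (\<theta> - c)"
    unfolding e by (simp add: cross_diff_right right_diff_distrib diff_divide_distrib)
  then show ?thesis by (simp add: normal_sine_def)
qed

lemma normal_sine_rotated:
  fixes c c0 v :: pt
  assumes "0 < \<rho>" "c0 + rotate t v \<noteq> c" "c0 + v \<noteq> radial_proj c \<rho> (c0 + rotate t v)"
  shows "\<exists>\<kappa>>0. normal_sine c (radial_proj c \<rho> (c0 + rotate t v)) (c0 + v)
      = \<kappa> * ((1 - cos t) * cross v (c - c0) + sin t * (v \<bullet> (c - c0 - v)))"
proof -
  have "cross (c0 + rotate t v - c) (c0 + v - c) = cross (rotate t v - (c - c0)) (v - (c - c0))"
    by (simp add: algebra_simps)
  also have "\<dots> = (1 - cos t) * cross v (c - c0) + sin t * (v \<bullet> (c - c0 - v))"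
    by (rule cross_rotate_diff)
  finally show ?thesis
    using assms normal_sine_radial_proj[of c \<rho> "c0 + rotate t v" "c0 + v"]
    by (intro exI[of _ "\<rho> / dist (c0 + rotate t v) c / norm (c0 + v - radial_proj c \<rho> (c0 + rotate t v))"])
      auto
qed

lemma reflect_if_normal_sines_cancel:
  assumes "z \<noteq> c" and pos: "0 < (\<theta>1 - z) \<bullet> (z - c)" "0 < (\<theta>2 - z) \<bullet> (z - c)"
    and cancel: "normal_sine c z \<theta>1 + normal_sine c z \<theta>2 = 0"
  shows "\<exists>s>0. \<theta>2 - z = s *\<^sub>R reflect (z - c) (z - \<theta>1)"
proof -
  define n where "n = z - c"
  define l1 l2 where "l1 = norm (\<theta>1 - z)" and "l2 = norm (\<theta>2 - z)"
  define u1 u2 where "u1 = (1 / l1) *\<^sub>R (\<theta>1 - z)" and "u2 = (1 / l2) *\<^sub>R (\<theta>2 - z)"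
  have l: "0 < l1" "0 < l2" using pos by (auto simp: l1_def l2_def)
  have \<theta>u: "\<theta>1 - z = l1 *\<^sub>R u1" "\<theta>2 - z = l2 *\<^sub>R u2" using l by (simp_all add: u1_def u2_def)
  have unit: "u1 \<bullet> u1 = 1" "u2 \<bullet> u2 = 1"
    using l by (simp_all add: u1_def u2_def l1_def l2_def dot_square_norm)
  have "0 < u1 \<bullet> n" "0 < u2 \<bullet> n" using pos l by (simp_all add: u1_def u2_def n_def)
  have "cross n (u1 + u2) = 0"
    using cancel by (simp add: normal_sine_def u1_def u2_def l1_def l2_def n_def cross_add_right)
  then have "u1 + u2 = \<kappa> *\<^sub>R n" if "\<kappa> = ((u1 + u2) \<bullet> n) / (n \<bullet> n)" for \<kappa>
    using cross_eq_0_imp_parallel \<open>z \<noteq> c\<close> that by (simp add: n_def)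
  then obtain \<kappa> where \<kappa>: "u2 = \<kappa> *\<^sub>R n - u1" by (metis add_diff_cancel_left')
  have "\<kappa> \<noteq> 0" using \<open>0 < u1 \<bullet> n\<close> \<open>0 < u2 \<bullet> n\<close> \<kappa> by auto
  moreover have "\<kappa> * (\<kappa> * (n \<bullet> n) - 2 * (u1 \<bullet> n)) = 0"
    using unit \<kappa> by (simp add: algebra_simps inner_commute)
  ultimately have "2 * (u1 \<bullet> n) / (n \<bullet> n) = \<kappa>"
    using \<open>z \<noteq> c\<close> by (simp add: n_def field_simps)
  then have "reflect n (- u1) = u2" by (simp add: reflect_def \<kappa>)
  then have "reflect n (z - \<theta>1) = l1 *\<^sub>R u2"
    using reflect_scaleR[of n l1 "- u1"] \<theta>u(1) by (simp add: algebra_simps)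
  then have "\<theta>2 - z = (l2 / l1) *\<^sub>R reflect n (z - \<theta>1)" using \<theta>u(2) l by simp
  then show ?thesis using l unfolding n_def by (intro exI[of _ "l2 / l1"]) simp
qed

lemma reflection_point_between:
  fixes z :: "real \<Rightarrow> pt"
  assumes "t0 \<le> t1" "continuous_on {t0..t1} z"
    and pos: "\<forall>t\<in>{t0..t1}. 0 < (\<theta>1 - z t) \<bullet> (z t - c) \<and> 0 < (\<theta>2 - z t) \<bullet> (z t - c)"
    and "normal_sine c (z t0) \<theta>1 + normal_sine c (z t0) \<theta>2 \<le> 0"
    and "0 \<le> normal_sine c (z t1) \<theta>1 + normal_sine c (z t1) \<theta>2"
  shows "\<exists>t\<in>{t0..t1}. \<exists>s>0. \<theta>2 - z t = s *\<^sub>R reflect (z t - c) (z t - \<theta>1)"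
proof -
  define F where "F t = normal_sine c (z t) \<theta>1 + normal_sine c (z t) \<theta>2" for t
  have "\<theta>1 \<noteq> z t" "\<theta>2 \<noteq> z t" if "t \<in> {t0..t1}" for t
    using pos that by (metis diff_self inner_zero_left less_irrefl)+
  then have "continuous_on {t0..t1} F"
    unfolding F_def normal_sine_def cross_def
    by (intro continuous_intros assms(2)) auto
  then obtain t where t: "t \<in> {t0..t1}" "F t = 0"
    using IVT'[of F t0 0 t1] assms(1,4,5) by (auto simp: F_def)
  have "z t \<noteq> c" using pos t(1) by fastforce
  then show ?thesis
    using reflect_if_normal_sines_cancel[of "z t" c \<theta>1 \<theta>2] pos t by (auto simp: F_def)
qed

lemma small_angle_dominates:
  fixes \<beta> \<gamma> \<epsilon> :: real
  assumes "0 < \<gamma>" "0 < \<epsilon>"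
  shows "\<exists>\<delta>>0. \<delta> < \<epsilon> \<and> \<bar>\<beta>\<bar> * (1 - cos \<delta>) < \<gamma> * sin \<delta>"
proof -
  define \<delta> where "\<delta> = min (\<epsilon> / 2) (min (1 / 2) (\<gamma> / (2 * (\<bar>\<beta>\<bar> + 1))))"
  have "0 < \<delta>" using assms by (simp add: \<delta>_def)
  have le: "\<delta> \<le> \<epsilon> / 2" "\<delta> \<le> 1 / 2" "\<delta> \<le> \<gamma> / (2 * (\<bar>\<beta>\<bar> + 1))"
    unfolding \<delta>_def by (intro min.cobounded1 min.coboundedI2 min.cobounded2)+
  then have \<delta>: "0 < \<delta>" "\<delta> < \<epsilon>" "\<delta> \<le> 1 / 2" using assms \<open>0 < \<delta>\<close> by linarith+
  from le(3) have "\<delta> * (\<bar>\<beta>\<bar> + 1) \<le> \<gamma> / 2"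
    by (simp add: field_simps add_pos_nonneg)
  have "\<delta> < pi / 2" using \<delta>(3) pi_ge_two by linarith
  then have "0 < sin \<delta>" "0 < cos \<delta>" using \<delta>(1) by (auto intro: sin_gt_zero cos_gt_zero)
  have "1 - cos \<delta> \<le> (1 - cos \<delta>) * (1 + cos \<delta>)"
    using \<open>0 < cos \<delta>\<close> cos_le_one[of \<delta>] by (simp add: algebra_simps)
  also have "\<dots> = sin \<delta> * sin \<delta>"
    using sin_cos_squared_add[of \<delta>] by (simp add: power2_eq_square algebra_simps)
  also have "\<dots> \<le> \<delta> * sin \<delta>"
    using sin_x_le_x[of \<delta>] \<delta>(1) \<open>0 < sin \<delta>\<close> by (simp add: mult_right_mono)
  finally have "\<bar>\<beta>\<bar> * (1 - cos \<delta>) \<le> (\<bar>\<beta>\<bar> * \<delta>) * sin \<delta>"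
    by (simp add: mult_left_mono mult.assoc)
  also have "\<dots> < \<gamma> * sin \<delta>"
  proof (rule mult_strict_right_mono)
    show "\<bar>\<beta>\<bar> * \<delta> < \<gamma>"
      using \<open>\<delta> * (\<bar>\<beta>\<bar> + 1) \<le> \<gamma> / 2\<close> \<delta>(1) assms(1) by (simp add: algebra_simps)
  qed (fact \<open>0 < sin \<delta>\<close>)
  finally show ?thesis using \<delta> by blast
qed

lemma sin_nonzero_in_interval:
  fixes t1 t2 :: real
  assumes "t1 < t2" shows "\<exists>t\<in>{t1..t2}. sin t \<noteq> 0"
proof (rule ccontr)
  assume none: "\<not> ?thesis"
  define d where "d = min (t2 - t1) 1"
  have "0 < d" "d < pi" using assms pi_gt3 by (auto simp: d_def)
  then have "0 < sin d" by (rule sin_gt_zero)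
  have "sin t1 = 0" "sin (t1 + d) = 0" using none assms \<open>0 < d\<close> by (auto simp: d_def)
  moreover have "cos t1 \<noteq> 0" using \<open>sin t1 = 0\<close> sin_cos_squared_add[of t1] by auto
  ultimately show False using \<open>0 < sin d\<close> by (simp add: sin_add)
qed

lemma nonpos_if_le_small_multiples:
  fixes u c h :: real
  assumes "0 < h" "\<forall>t. 0 < t \<longrightarrow> t < h \<longrightarrow> u \<le> c * t"
  shows "u \<le> 0"
proof (rule ccontr)
  assume "\<not> u \<le> 0"
  define t where "t = min (h / 2) (u / (2 * (\<bar>c\<bar> + 1)))"
  have "0 < t" "t < h" using assms(1) \<open>\<not> u \<le> 0\<close> by (auto simp: t_def)
  have "t \<le> u / (2 * (\<bar>c\<bar> + 1))" by (simp add: t_def)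
  then have "(\<bar>c\<bar> + 1) * t \<le> u / 2" by (simp add: field_simps add_pos_nonneg)
  moreover have "c * t \<le> (\<bar>c\<bar> + 1) * t" using \<open>0 < t\<close> by (intro mult_right_mono) auto
  ultimately have "c * t < u" using \<open>\<not> u \<le> 0\<close> by linarith
  then show False using assms(2) \<open>0 < t\<close> \<open>t < h\<close> by force
qed

lemma norm_add_scaleR_gt:
  fixes p v :: "'a::real_inner"
  assumes "0 < v \<bullet> p" "0 < s"
  shows "norm p < norm (p + s *\<^sub>R v)"
proof -
  have "(p + s *\<^sub>R v) \<bullet> (p + s *\<^sub>R v) = p \<bullet> p + 2 * s * (v \<bullet> p) + s * s * (v \<bullet> v)"
    by (simp add: algebra_simps inner_commute)
  moreover have "0 < 2 * s * (v \<bullet> p)" "0 \<le> s * s * (v \<bullet> v)" using assms by auto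
  ultimately have "p \<bullet> p < (p + s *\<^sub>R v) \<bullet> (p + s *\<^sub>R v)" by linarith
  then have "(norm p)\<^sup>2 < (norm (p + s *\<^sub>R v))\<^sup>2"
    by (simp add: power2_norm_eq_inner)
  then show ?thesis by (simp add: power_less_imp_less_base)
qed

lemma dist_lt_on_outward_segment:
  fixes c \<theta> z y :: "'a::real_inner"
  assumes "0 < (z - \<theta>) \<bullet> (\<theta> - c)" "y \<in> closed_segment \<theta> z" "y \<noteq> \<theta>"
  shows "dist c \<theta> < dist c y"
proof -
  obtain s where s: "0 \<le> s" "s \<le> 1" "y = (1 - s) *\<^sub>R \<theta> + s *\<^sub>R z"
    using assms(2) by (auto simp: in_segment)
  have "s \<noteq> 0" using s assms(3) by auto
  have "y - c = (\<theta> - c) + s *\<^sub>R (z - \<theta>)" using s(3) by (simp add: algebra_simps)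
  moreover have "norm (\<theta> - c) < norm ((\<theta> - c) + s *\<^sub>R (z - \<theta>))"
    using assms(1) s(1) \<open>s \<noteq> 0\<close> by (intro norm_add_scaleR_gt) auto
  ultimately show ?thesis by (metis dist_commute dist_norm)
qed

lemma inner_nonneg_if_segment_avoids_ball:
  fixes c \<theta> z :: "'a::real_inner"
  assumes "dist c \<theta> = \<rho>" "\<theta> \<noteq> z" "open_segment \<theta> z \<inter> ball c \<rho> = {}"
  shows "0 \<le> (z - \<theta>) \<bullet> (\<theta> - c)"
proof -
  define v g where "v = z - \<theta>" and "g = (z - \<theta>) \<bullet> (\<theta> - c)"
  have "- 2 * g \<le> (v \<bullet> v) * t" if "0 < t" "t < 1" for t
  proof -
    have "\<theta> + t *\<^sub>R v = (1 - t) *\<^sub>R \<theta> + t *\<^sub>R z" by (simp add: v_def algebra_simps)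
    then have "\<theta> + t *\<^sub>R v \<in> open_segment \<theta> z"
      using that assms(2) by (auto simp: in_segment)
    then have "\<rho> \<le> norm ((\<theta> - c) + t *\<^sub>R v)"
      using assms(3) by (auto simp: dist_norm norm_minus_commute algebra_simps)
    moreover have "norm (\<theta> - c) = \<rho>" "0 \<le> \<rho>"
      using assms(1) by (auto simp: dist_norm norm_minus_commute)
    ultimately have "(\<theta> - c) \<bullet> (\<theta> - c) \<le> ((\<theta> - c) + t *\<^sub>R v) \<bullet> ((\<theta> - c) + t *\<^sub>R v)"
      by (simp add: power_mono flip: power2_norm_eq_inner)
    also have "\<dots> = (\<theta> - c) \<bullet> (\<theta> - c) + t * (2 * g + (v \<bullet> v) * t)"
      unfolding g_def v_def by (simp add: algebra_simps inner_commute)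
    finally have "0 \<le> t * (2 * g + (v \<bullet> v) * t)" by simp
    then show ?thesis using that(1) by (simp add: zero_le_mult_iff)
  qed
  then have "- 2 * g \<le> 0"
    by (intro nonpos_if_le_small_multiples[of 1]) auto
  then show ?thesis by (simp add: g_def)
qed

lemma closed_segment_interior_but_end:
  fixes x z y :: "'a::euclidean_space"
  assumes "x \<in> interior G" "closed_segment x z \<inter> frontier G \<subseteq> {z}"
    and "y \<in> closed_segment x z" "y \<noteq> z"
  shows "y \<in> interior G"
proof -
  have "closed_segment x y \<subseteq> closed_segment x z"
    using assms(3) by (simp add: subset_closed_segment)
  moreover have "z \<notin> closed_segment x y"
    using assms(3,4) between_antisym[of z x y]
    by (auto simp: between_mem_segment closed_segment_commute)
  ultimately have "closed_segment x y \<inter> frontier (interior G) = {}"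
    using assms(2) frontier_interior_subset by blast
  then have "closed_segment x y \<subseteq> interior G"
    using connected_Int_frontier[of "closed_segment x y" "interior G"] assms(1) by auto
  then show ?thesis by auto
qed

lemma tangent_to_disk_commute: "tangent_to_disk L r p q \<longleftrightarrow> tangent_to_disk L r q p"
  unfolding tangent_to_disk_def
  by (metis closed_segment_commute inner_minus_left minus_diff_eq neg_equal_0_iff_equal)

lemma not_tangent_if_outward:
  assumes "dist \<theta> (disk_center L) = r" "0 < (z - \<theta>) \<bullet> (\<theta> - disk_center L)"
  shows "\<not> tangent_to_disk L r \<theta> z"
proof
  assume "tangent_to_disk L r \<theta> z"
  then obtain x where x: "x \<in> closed_segment \<theta> z" "dist x (disk_center L) = r"
    "(z - \<theta>) \<bullet> (x - disk_center L) = 0"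
    unfolding tangent_to_disk_def by blast
  have "x = \<theta>"
    using dist_lt_on_outward_segment[OF assms(2) x(1)] assms(1) x(2) by (auto simp: dist_commute)
  then show False using x(3) assms(2) by simp
qed

lemma isCont_pos_near:
  fixes f :: "'a::metric_space \<Rightarrow> real"
  assumes "isCont f x0" "0 < f x0"
  shows "\<exists>e>0. \<forall>x. dist x x0 < e \<longrightarrow> 0 < f x"
proof -
  obtain e where "0 < e" "\<forall>x. dist x x0 < e \<longrightarrow> dist (f x) (f x0) < f x0"
    using assms unfolding continuous_at_eps_delta by blast
  then show ?thesis by (metis dist_real_def abs_diff_less_iff diff_self)
qed

lemma isCont_pos_near_pair:
  fixes g :: "'a::metric_space \<times> 'b::metric_space \<Rightarrow> real"
  assumes "isCont g (x0, y0)" "0 < g (x0, y0)"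
  shows "\<exists>e>0. \<forall>x y. dist x x0 < e \<longrightarrow> dist y y0 < e \<longrightarrow> 0 < g (x, y)"
proof -
  obtain e where e: "0 < e" "\<forall>p. dist p (x0, y0) < e \<longrightarrow> 0 < g p"
    using isCont_pos_near[OF assms] by blast
  have "dist (x, y) (x0, y0) < e" if "dist x x0 < e / 2" "dist y y0 < e / 2" for x y
    using that sqrt_sum_squares_le_sum[of "dist x x0" "dist y y0"]
    by (simp add: dist_Pair_Pair)
  then show ?thesis using e by (intro exI[of _ "e / 2"]) auto
qed

lemma dist_convex_comb_less:
  fixes t t' z z' :: "'a::real_normed_vector"
  assumes "0 \<le> s" "s \<le> 1" "dist t t' < e" "dist z z' < e"
  shows "dist ((1 - s) *\<^sub>R t + s *\<^sub>R z) ((1 - s) *\<^sub>R t' + s *\<^sub>R z') < e"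
proof -
  have "dist ((1 - s) *\<^sub>R t + s *\<^sub>R z) ((1 - s) *\<^sub>R t' + s *\<^sub>R z')
      = norm ((1 - s) *\<^sub>R (t - t') + s *\<^sub>R (z - z'))"
    by (simp add: dist_norm algebra_simps)
  also have "\<dots> \<le> (1 - s) * dist t t' + s * dist z z'"
    using norm_triangle_ineq[of "(1 - s) *\<^sub>R (t - t')" "s *\<^sub>R (z - z')"] assms(1,2)
    by (simp add: dist_norm)
  also have "\<dots> < (1 - s) * e + s * e"
  proof (cases "s = 1")
    case False
    then have "(1 - s) * dist t t' < (1 - s) * e" using assms by (intro mult_strict_left_mono) auto
    moreover have "s * dist z z' \<le> s * e" using assms by (intro mult_left_mono) auto
    ultimately show ?thesis by linarith
  qed (use assms in simp)
  finally show ?thesis by (simp add: algebra_simps)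
qed

lemma circle_centre_if_cross_outside:
  fixes w1 w2 c1 c2 \<rho> h s :: real
  assumes "dist (w1, w2) (c1, c2) = \<rho>" "0 < h" "s = 1 \<or> s = -1"
    and vert: "\<forall>y. \<bar>y\<bar> < h \<longrightarrow> \<rho> \<le> dist (w1, w2 + y) (c1, c2)"
    and horiz: "\<forall>t. 0 < t \<longrightarrow> t < h \<longrightarrow> \<rho> \<le> dist (w1 + s * t, w2) (c1, c2)"
  shows "c1 = w1 - s * \<rho> \<and> c2 = w2"
proof -
  define u v where "u = c1 - w1" and "v = c2 - w2"
  have sq: "(dist (x, y) (c1, c2))\<^sup>2 = (x - c1)\<^sup>2 + (y - c2)\<^sup>2" for x y
    by (simp add: dist_Pair_Pair dist_real_def)
  have circ: "\<rho>\<^sup>2 = u\<^sup>2 + v\<^sup>2" "0 \<le> \<rho>"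
    using assms(1) sq[of w1 w2] by (auto simp: u_def v_def power2_commute)
  have le: "\<rho>\<^sup>2 \<le> (x - c1)\<^sup>2 + (y - c2)\<^sup>2" if "\<rho> \<le> dist (x, y) (c1, c2)" for x y
    using power_mono[OF that circ(2), of 2] sq[of x y] by simp
  have "2 * v \<le> 1 * t \<and> - 2 * v \<le> 1 * t \<and> 2 * (s * u) \<le> 1 * t" if "0 < t" "t < h" for t
  proof -
    have "\<rho>\<^sup>2 \<le> (w1 - c1)\<^sup>2 + (w2 + t - c2)\<^sup>2" "\<rho>\<^sup>2 \<le> (w1 - c1)\<^sup>2 + (w2 - t - c2)\<^sup>2"
      "\<rho>\<^sup>2 \<le> (w1 + s * t - c1)\<^sup>2 + (w2 - c2)\<^sup>2"
      using le vert[rule_format, of t] vert[rule_format, of "- t"] horiz[rule_format, OF that] that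
      by auto
    moreover have "w1 - c1 = - u" "w2 + t - c2 = t - v" "w2 - t - c2 = - t - v"
      "w1 + s * t - c1 = s * t - u" "w2 - c2 = - v"
      by (simp_all add: u_def v_def)
    ultimately have "\<rho>\<^sup>2 \<le> u\<^sup>2 + (t - v)\<^sup>2" "\<rho>\<^sup>2 \<le> u\<^sup>2 + (- t - v)\<^sup>2" "\<rho>\<^sup>2 \<le> (s * t - u)\<^sup>2 + v\<^sup>2"
      by simp_all
    moreover have "s * (s * (t * t)) = t * t" using assms(3) by auto
    ultimately have "0 \<le> t * (t - 2 * v)" "0 \<le> t * (t + 2 * v)" "0 \<le> t * (t - 2 * (s * u))"
      unfolding circ(1) by (simp_all add: power2_eq_square algebra_simps)
    then show ?thesis using that(1) by (simp add: zero_le_mult_iff)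
  qed
  then have "2 * v \<le> 0" "- 2 * v \<le> 0" "2 * (s * u) \<le> 0"
    using assms(2) by (intro nonpos_if_le_small_multiples[of h]; blast)+
  then have "v = 0" "s * u \<le> 0" by auto
  moreover have "u = \<rho> \<or> u = - \<rho>"
    using circ \<open>v = 0\<close> by (metis add_0_right power2_eq_iff power_zero_numeral)
  ultimately show ?thesis using assms(3) circ(2) by (auto simp: u_def v_def)
qed

section \<open>The cell\<close>

locale cell_geometry =
  fixes L a r :: real and b :: nat and cc :: "nat \<Rightarrow> pt" and R :: "nat \<Rightarrow> real"
    and A :: "nat \<Rightarrow> pt set" and Gbox :: "pt set"
  assumes cell: "is_cell L a r b cc R A Gbox"
begin

abbreviation "cD \<equiv> disk_center L"
abbreviation "S \<equiv> sphere cD r"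
abbreviation "Fr \<equiv> frontier Gbox"
abbreviation "Cor \<equiv> corners L a b A"
abbreviation "Opn \<equiv> opening_L a \<union> opening_R L a"

lemma L_pos: "0 < L" and a_pos: "0 < a" and r_pos: "0 < r" and closed_box: "closed Gbox"
  and frontier_box: "Fr = Opn \<union> (\<Union>k\<in>{1..b}. A k)"
  and disk_interior: "cball cD r \<subseteq> interior Gbox"
  and disk_frontier: "cball cD r \<inter> Fr = {}"
  using cell unfolding is_cell_def by argo+

lemma box_x_range: "(x, y) \<in> Gbox \<Longrightarrow> 0 \<le> x \<and> x \<le> L"
proof -
  have "\<forall>x y. (x, y) \<in> Gbox \<longrightarrow> 0 \<le> x \<and> x \<le> L"
    using cell unfolding is_cell_def by argo
  then show "(x, y) \<in> Gbox \<Longrightarrow> 0 \<le> x \<and> x \<le> L" by blast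
qed

lemma star_shaped: "z \<in> Fr \<Longrightarrow> closed_segment cD z \<inter> Fr = {z}"
proof -
  have "\<forall>z\<in>Fr. closed_segment cD z \<inter> Fr = {z}"
    using cell unfolding is_cell_def by argo
  then show "z \<in> Fr \<Longrightarrow> closed_segment cD z \<inter> Fr = {z}" by blast
qed

lemma
  assumes "k \<in> {1..b}"
  shows R_pos: "0 < R k"
    and arc_param: "\<exists>t1 t2. t1 < t2 \<and> A k = (\<lambda>t. cc k + R k *\<^sub>R (cos t, sin t)) ` {t1..t2}"
    and arc_dispersing: "z \<in> A k \<Longrightarrow> \<exists>e>0. \<forall>w\<in>Gbox. dist w z < e \<longrightarrow> R k \<le> dist w (cc k)"
proof -
  have "\<forall>k\<in>{1..b}. 0 < R k \<and>
        (\<exists>t1 t2. t1 < t2 \<and> t2 - t1 < 2 * pi \<and>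
           A k = (\<lambda>t. cc k + R k *\<^sub>R (cos t, sin t)) ` {t1..t2}) \<and>
        (\<forall>z\<in>A k. \<exists>e>0. \<forall>w\<in>Gbox. dist w z < e \<longrightarrow> R k \<le> dist w (cc k))"
    using cell unfolding is_cell_def by argo
  then show "0 < R k" "\<exists>t1 t2. t1 < t2 \<and> A k = (\<lambda>t. cc k + R k *\<^sub>R (cos t, sin t)) ` {t1..t2}"
    "z \<in> A k \<Longrightarrow> \<exists>e>0. \<forall>w\<in>Gbox. dist w z < e \<longrightarrow> R k \<le> dist w (cc k)"
    using assms by blast+
qed

lemma frontier_subset_box: "Fr \<subseteq> Gbox"
  using closed_box by (simp add: frontier_subset_closed)

lemma arc_subset_frontier: "k \<in> {1..b} \<Longrightarrow> A k \<subseteq> Fr"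
  using frontier_box by blast

lemma openings_subset_frontier: "Opn \<subseteq> Fr"
  using frontier_box by blast

lemma sphere_subset_interior: "\<theta> \<in> S \<Longrightarrow> \<theta> \<in> interior Gbox"
  using disk_interior by auto

lemma sphere_notin_frontier: "\<theta> \<in> S \<Longrightarrow> \<theta> \<notin> Fr"
  using disk_frontier by auto

lemma radius_lt_dist_frontier: "z \<in> Fr \<Longrightarrow> r < dist cD z"
  using disk_frontier by (metis IntI empty_iff mem_cball not_le)

lemma dist_arc_centre:
  assumes "k \<in> {1..b}" "z \<in> A k" shows "dist z (cc k) = R k"
proof -
  obtain t where "z = cc k + R k *\<^sub>R (cos t, sin t)"
    using arc_param[OF assms(1)] assms(2) by blast
  moreover have "(R k * cos t)\<^sup>2 + (R k * sin t)\<^sup>2 = (R k)\<^sup>2"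
    unfolding power_mult_distrib by (metis distrib_left mult.right_neutral sin_cos_squared_add2)
  ultimately show ?thesis using R_pos[OF assms(1)] by (simp add: dist_norm norm_Pair)
qed

lemma piece_cases:
  assumes "i \<in> {0..b+1}"
  obtains "i = 0" "piece L a b A i = opening_L a"
    | "i = b + 1" "piece L a b A i = opening_R L a"
    | "i \<in> {1..b}" "piece L a b A i = A i"
  using assms unfolding piece_def by (cases "i = 0"; cases "i = b + 1") auto

lemma compact_piece:
  assumes "i \<in> {0..b+1}" shows "compact (piece L a b A i)"
proof -
  have "opening_L a = (\<lambda>y. (0, y)) ` {-a..a}" "opening_R L a = (\<lambda>y. (L, y)) ` {-a..a}"
    unfolding opening_L_def opening_R_def by auto
  then have "compact (opening_L a)" "compact (opening_R L a)"
    by (auto intro!: compact_continuous_image continuous_intros)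
  moreover have "compact (A k)" if "k \<in> {1..b}" for k
    using arc_param[OF that] by (auto intro!: compact_continuous_image continuous_intros)
  ultimately show ?thesis by (cases rule: piece_cases[OF assms]) simp_all
qed

lemma frontier_eq_pieces: "Fr = (\<Union>i\<in>{0..b+1}. piece L a b A i)"
proof -
  have "{0..b+1} = insert 0 (insert (b + 1) {1..b})" by auto
  moreover have "(\<Union>i\<in>{1..b}. piece L a b A i) = (\<Union>k\<in>{1..b}. A k)"
    by (rule SUP_cong) (auto simp: piece_def)
  moreover have "piece L a b A 0 = opening_L a" "piece L a b A (b + 1) = opening_R L a"
    by (simp_all add: piece_def)
  ultimately show ?thesis using frontier_box by auto
qed

definition other_pieces :: "nat \<Rightarrow> pt set" where
  "other_pieces k = (\<Union>i\<in>{0..b+1} - {k}. piece L a b A i)"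

lemma closed_other_pieces: "closed (other_pieces k)"
  unfolding other_pieces_def by (auto intro!: closed_UN compact_imp_closed compact_piece)

lemma piece_subset_other_pieces: "i \<in> {0..b+1} \<Longrightarrow> i \<noteq> k \<Longrightarrow> piece L a b A i \<subseteq> other_pieces k"
  unfolding other_pieces_def by blast

lemma openings_subset_other_pieces: "k \<in> {1..b} \<Longrightarrow> Opn \<subseteq> other_pieces k"
  using piece_subset_other_pieces[of 0 k] piece_subset_other_pieces[of "b + 1" k]
  by (simp add: piece_def)

lemma frontier_minus_other_pieces:
  assumes "k \<in> {1..b}" "x \<in> Fr" "x \<notin> other_pieces k" shows "x \<in> A k"
proof -
  have "x \<in> piece L a b A k" using assms(2,3) unfolding frontier_eq_pieces other_pieces_def by blast
  then show ?thesis using assms(1) by (simp add: piece_def)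
qed

lemma arc_point_in_corners_iff:
  assumes "k \<in> {1..b}" "z \<in> A k"
  shows "z \<in> Cor \<longleftrightarrow> z \<in> other_pieces k"
proof
  have zk: "z \<in> piece L a b A k" "k \<in> {0..b+1}" using assms by (auto simp: piece_def)
  show "z \<in> Cor \<Longrightarrow> z \<in> other_pieces k"
  proof -
    assume "z \<in> Cor"
    then obtain i j where "i \<in> {0..b+1}" "j \<in> {0..b+1}" "i \<noteq> j"
      "z \<in> piece L a b A i" "z \<in> piece L a b A j"
      unfolding corners_def by blast
    then show ?thesis by (metis piece_subset_other_pieces subsetD)
  qed
  show "z \<in> other_pieces k \<Longrightarrow> z \<in> Cor"
    using zk unfolding other_pieces_def corners_def by blast
qed

lemma notin_corners_if_unique_piece:
  "(\<forall>i\<in>{0..b+1}. z \<in> piece L a b A i \<longrightarrow> i = i0) \<Longrightarrow> z \<notin> Cor"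
  unfolding corners_def by blast

lemma star_segment_subset_box:
  assumes "z \<in> Fr" shows "closed_segment cD z \<subseteq> Gbox"
proof
  fix y assume y: "y \<in> closed_segment cD z"
  have "cD \<in> interior Gbox" using disk_interior r_pos by auto
  then have "y \<in> interior Gbox" if "y \<noteq> z"
    using closed_segment_interior_but_end star_shaped[OF assms] y that by blast
  then show "y \<in> Gbox" using assms frontier_subset_box interior_subset by blast
qed

lemma arc_centre_at_opening_centre:
  assumes k: "k \<in> {1..b}" and z: "(x0, 0) \<in> A k" and s: "s = 1 \<or> s = -1"
    and vert: "\<forall>y. \<bar>y\<bar> \<le> a \<longrightarrow> (x0, y) \<in> Gbox"
    and horiz: "\<forall>t. 0 < t \<longrightarrow> t \<le> L / 2 \<longrightarrow> (x0 + s * t, 0) \<in> Gbox"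
  shows "cc k = (x0 - s * R k, 0)"
proof -
  obtain e where e: "0 < e" "\<forall>w\<in>Gbox. dist w (x0, 0) < e \<longrightarrow> R k \<le> dist w (cc k)"
    using arc_dispersing[OF k z] by blast
  obtain c1 c2 where c: "cc k = (c1, c2)" by (cases "cc k")
  define h where "h = min e (min a (L / 2))"
  have h: "0 < h" "h \<le> e" "h \<le> a" "h \<le> L / 2"
    using e(1) a_pos L_pos by (auto simp: h_def)
  have "c1 = x0 - s * R k \<and> c2 = 0"
  proof (rule circle_centre_if_cross_outside[of x0 0 c1 c2 "R k" h s, simplified])
    show "dist (x0, 0) (c1, c2) = R k" using dist_arc_centre[OF k z] c by simp
    show "0 < h" "s = 1 \<or> s = -1" by (fact h(1), fact s)
    show "\<forall>y. \<bar>y\<bar> < h \<longrightarrow> R k \<le> dist (x0, y) (c1, c2)"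
    proof (intro allI impI)
      fix y assume "\<bar>y\<bar> < h"
      then have "(x0, y) \<in> Gbox" "dist (x0, y) (x0, 0) < e"
        using vert h by (auto simp: dist_Pair_Pair dist_real_def)
      then show "R k \<le> dist (x0, y) (c1, c2)" using e(2) c by auto
    qed
    show "\<forall>t. 0 < t \<longrightarrow> t < h \<longrightarrow> R k \<le> dist (x0 + s * t, 0) (c1, c2)"
    proof (intro allI impI)
      fix t assume "0 < t" "t < h"
      then have "(x0 + s * t, 0) \<in> Gbox" "dist (x0 + s * t, 0) (x0, 0) < e"
        using horiz h s by (auto simp: dist_Pair_Pair dist_real_def)
      then show "R k \<le> dist (x0 + s * t, 0) (c1, c2)" using e(2) c by auto
    qed
  qed
  then show ?thesis using c by simp
qed

text \<open>By the dispersing condition a circle C_k through the centre of an opening is tangent to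
  the opening there, with its centre outside the box; the arc would then leave the box.\<close>
lemma opening_centre_notin_arc:
  assumes k: "k \<in> {1..b}" and s: "s = 1 \<or> s = -1"
    and vert: "\<forall>y. \<bar>y\<bar> \<le> a \<longrightarrow> (x0, y) \<in> Gbox"
    and horiz: "\<forall>t. 0 < t \<longrightarrow> t \<le> L / 2 \<longrightarrow> (x0 + s * t, 0) \<in> Gbox"
    and side: "\<forall>x y. (x, y) \<in> Gbox \<longrightarrow> 0 \<le> s * (x - x0)"
  shows "(x0, 0) \<notin> A k"
proof
  assume z: "(x0, 0) \<in> A k"
  have centre: "cc k = (x0 - s * R k, 0)"
    by (rule arc_centre_at_opening_centre[OF k z s vert horiz])
  obtain t1 t2 where t: "t1 < t2" "A k = (\<lambda>t. cc k + R k *\<^sub>R (cos t, sin t)) ` {t1..t2}"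
    using arc_param[OF k] by blast
  have "sin t = 0" if "t \<in> {t1..t2}" for t
  proof -
    have "cc k + R k *\<^sub>R (cos t, sin t) \<in> Gbox"
      using t(2) that arc_subset_frontier[OF k] frontier_subset_box by blast
    then have "(x0 - s * R k + R k * cos t, R k * sin t) \<in> Gbox" using centre by simp
    then have "0 \<le> s * (x0 - s * R k + R k * cos t - x0)" using side by blast
    also have "\<dots> = R k * (s * cos t - s * s)" by (simp add: algebra_simps)
    also have "\<dots> = R k * (s * cos t - 1)" using s by auto
    finally have "1 \<le> s * cos t" using R_pos[OF k] by (simp add: zero_le_mult_iff)
    moreover have "s * cos t \<le> 1" using s by auto
    ultimately have "s * cos t = 1" by linarith
    then have "(cos t)\<^sup>2 = 1" using s by auto
    then show ?thesis using sin_cos_squared_add[of t] by simp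
  qed
  then show False using sin_nonzero_in_interval[OF t(1)] by blast
qed

lemma opening_centres:
  shows "(0, 0) \<in> Fr" "(0, 0) \<notin> Cor" "(L, 0) \<in> Fr" "(L, 0) \<notin> Cor"
proof -
  show "(0, 0) \<in> Fr" "(L, 0) \<in> Fr"
    using openings_subset_frontier a_pos by (auto simp: opening_L_def opening_R_def)
  have "(t, 0) \<in> closed_segment cD (0, 0)" "(L - t, 0) \<in> closed_segment cD (L, 0)"
    if "0 \<le> t" "t \<le> L / 2" for t
    using that L_pos unfolding in_segment disk_center_def
    by (auto intro!: exI[of _ "1 - 2 * t / L"]) (simp_all add: field_simps)
  then have horiz: "(t, 0) \<in> Gbox" "(L - t, 0) \<in> Gbox" if "0 < t" "t \<le> L / 2" for t
    using that star_segment_subset_box[OF \<open>(0, 0) \<in> Fr\<close>] star_segment_subset_box[OF \<open>(L, 0) \<in> Fr\<close>]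
    by auto
  have "Opn \<subseteq> Gbox" using openings_subset_frontier frontier_subset_box by blast
  then have vert: "(0, y) \<in> Gbox" "(L, y) \<in> Gbox" if "\<bar>y\<bar> \<le> a" for y
    using that by (auto simp: opening_L_def opening_R_def abs_le_iff)
  have "(0, 0) \<notin> A k" "(L, 0) \<notin> A k" if "k \<in> {1..b}" for k
    using opening_centre_notin_arc[OF that, of 1 0] opening_centre_notin_arc[OF that, of "-1" L]
      vert horiz box_x_range by auto
  note notin_arcs = this
  show "(0, 0) \<notin> Cor"
  proof (rule notin_corners_if_unique_piece[of _ 0], intro ballI impI)
    fix i assume "i \<in> {0..b+1}" "(0, 0) \<in> piece L a b A i"
    then show "i = 0" using notin_arcs L_pos by (cases rule: piece_cases) (auto simp: opening_R_def)
  qed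
  show "(L, 0) \<notin> Cor"
  proof (rule notin_corners_if_unique_piece[of _ "b + 1"], intro ballI impI)
    fix i assume "i \<in> {0..b+1}" "(L, 0) \<in> piece L a b A i"
    then show "i = b + 1" using notin_arcs L_pos by (cases rule: piece_cases) (auto simp: opening_L_def)
  qed
qed

lemma corners_subset_frontier: "Cor \<subseteq> Fr"
  unfolding corners_def frontier_eq_pieces by blast

definition leg :: "pt \<Rightarrow> pt \<Rightarrow> bool" where
  "leg \<theta> z \<longleftrightarrow> \<theta> \<in> S \<and> z \<notin> Cor \<and> closed_segment \<theta> z \<subseteq> cell Gbox L r \<and>
     closed_segment \<theta> z \<inter> Fr = {z} \<and> \<not> tangent_to_disk L r \<theta> z"

lemma leg_intro:
  assumes \<theta>: "\<theta> \<in> S" and z: "z \<in> Fr" "z \<notin> Cor"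
    and out: "0 < (z - \<theta>) \<bullet> (\<theta> - cD)" and fr: "closed_segment \<theta> z \<inter> Fr \<subseteq> {z}"
  shows "leg \<theta> z"
proof -
  have \<theta>r: "dist cD \<theta> = r" using \<theta> by simp
  have "y \<in> cell Gbox L r" if y: "y \<in> closed_segment \<theta> z" for y
  proof -
    have "y \<in> Gbox"
    proof (cases "y = z")
      case False
      then have "y \<in> interior Gbox"
        using closed_segment_interior_but_end[OF sphere_subset_interior[OF \<theta>] fr y] by blast
      then show ?thesis using interior_subset by blast
    qed (use z frontier_subset_box in blast)
    moreover have "r \<le> dist cD y"
      using dist_lt_on_outward_segment[OF out y] \<theta>r by (cases "y = \<theta>") auto
    ultimately show ?thesis by (simp add: cell_def)
  qed
  moreover have "closed_segment \<theta> z \<inter> Fr = {z}" using fr z(1) by auto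
  moreover have "\<not> tangent_to_disk L r \<theta> z"
    using not_tangent_if_outward[OF _ out] \<theta>r by (simp add: dist_commute)
  ultimately show ?thesis using \<theta> z(2) by (auto simp: leg_def)
qed

lemma leg_radial_proj:
  assumes z: "z \<in> Fr" "z \<notin> Cor" shows "leg (radial_proj cD r z) z"
proof (rule leg_intro[OF _ z])
  have d: "r < dist z cD" using radius_lt_dist_frontier[OF z(1)] by (simp add: dist_commute)
  then have "z \<noteq> cD" using r_pos by auto
  then show "radial_proj cD r z \<in> S"
    using dist_radial_proj[of z cD r] r_pos by (simp add: dist_commute)
  show "0 < (z - radial_proj cD r z) \<bullet> (radial_proj cD r z - cD)"
    using radial_proj_inner_pos[OF r_pos d] .
  have "radial_proj cD r z = (1 - r / dist z cD) *\<^sub>R cD + (r / dist z cD) *\<^sub>R z"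
    by (simp add: radial_proj_def algebra_simps)
  moreover have "0 \<le> r / dist z cD" "r / dist z cD \<le> 1" using d r_pos by (auto simp: divide_le_eq_1)
  ultimately have "radial_proj cD r z \<in> closed_segment cD z"
    unfolding in_segment by blast
  then have "closed_segment (radial_proj cD r z) z \<subseteq> closed_segment cD z"
    by (simp add: subset_closed_segment)
  then show "closed_segment (radial_proj cD r z) z \<inter> Fr \<subseteq> {z}"
    using star_shaped[OF z(1)] by blast
qed

lemma leg_facts:
  assumes "leg \<theta> z"
  shows "\<theta> \<in> S" "z \<in> Fr" "z \<notin> Cor" "\<theta> \<noteq> z" "closed_segment \<theta> z \<subseteq> cell Gbox L r"
    "closed_segment \<theta> z \<inter> Cor = {}" "closed_segment \<theta> z \<inter> Opn \<subseteq> {z}"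
    "\<not> tangent_to_disk L r \<theta> z"
proof -
  have fr: "closed_segment \<theta> z \<inter> Fr = {z}" using assms by (simp add: leg_def)
  show "\<theta> \<in> S" "z \<notin> Cor" "closed_segment \<theta> z \<subseteq> cell Gbox L r" "\<not> tangent_to_disk L r \<theta> z"
    using assms by (simp_all add: leg_def)
  show "z \<in> Fr" using fr by blast
  then show "\<theta> \<noteq> z" using sphere_notin_frontier \<open>\<theta> \<in> S\<close> by blast
  show "closed_segment \<theta> z \<inter> Cor = {}" "closed_segment \<theta> z \<inter> Opn \<subseteq> {z}"
    using fr \<open>z \<notin> Cor\<close> corners_subset_frontier openings_subset_frontier by auto
qed

subsection \<open>Returning rays\<close>

text \<open>The dispersing condition forbids the box from entering the circle C_k near the
  reflection point, so a ray that is reflected straight back must come from outside C_k.\<close>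
lemma return_point_beyond_arc:
  assumes k: "k \<in> {1..b}" and z: "z \<in> A k" "z \<noteq> \<theta>" and seg: "open_segment \<theta> z \<subseteq> Gbox"
    and s: "0 < s" "\<theta> - z = s *\<^sub>R reflect (z - cc k) (z - \<theta>)"
  shows "\<exists>\<mu>>1. \<theta> - cc k = \<mu> *\<^sub>R (z - cc k)"
proof -
  define w where "w = z - cc k"
  have nw: "norm w = R k" using dist_arc_centre[OF k z(1)] by (simp add: w_def dist_norm)
  have Rk: "0 < R k" using R_pos[OF k] .
  obtain \<kappa> where v: "z - \<theta> = \<kappa> *\<^sub>R w"
    using reflect_antiparallel_imp_parallel[OF s(1), of "z - \<theta>" w] s(2) by (auto simp: w_def)
  have "\<kappa> < 0"
  proof (rule ccontr)
    assume "\<not> \<kappa> < 0"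
    then have "0 < \<kappa>" using v z(2) by (cases "\<kappa> = 0") auto
    obtain e where e: "0 < e" "\<forall>x\<in>Gbox. dist x z < e \<longrightarrow> R k \<le> dist x (cc k)"
      using arc_dispersing[OF k z(1)] by blast
    define \<tau> where "\<tau> = min (1 / 2) (min (1 / (2 * \<kappa>)) (e / (2 * \<kappa> * R k)))"
    have "0 < \<tau>" "\<tau> < 1" using \<open>0 < \<kappa>\<close> e(1) Rk by (auto simp: \<tau>_def)
    have "\<tau> \<le> 1 / (2 * \<kappa>)" "\<tau> \<le> e / (2 * \<kappa> * R k)"
      unfolding \<tau>_def by (intro min.coboundedI2 min.cobounded1 min.cobounded2)+
    then have "\<tau> * \<kappa> < 1" "\<tau> * \<kappa> * R k < e"
      using \<open>0 < \<kappa>\<close> Rk e(1) by (simp_all add: field_simps)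
    define x where "x = z - (\<tau> * \<kappa>) *\<^sub>R w"
    have "x = (1 - (1 - \<tau>)) *\<^sub>R \<theta> + (1 - \<tau>) *\<^sub>R z"
      using v by (simp add: x_def algebra_simps)
    then have "x \<in> open_segment \<theta> z"
      using \<open>0 < \<tau>\<close> \<open>\<tau> < 1\<close> z(2) unfolding in_segment by (auto intro!: exI[of _ "1 - \<tau>"])
    then have "x \<in> Gbox" using seg by blast
    moreover have "dist x z = \<tau> * \<kappa> * R k"
      using nw \<open>0 < \<tau>\<close> \<open>0 < \<kappa>\<close> by (simp add: x_def dist_norm)
    moreover have "x - cc k = (1 - \<tau> * \<kappa>) *\<^sub>R w" by (simp add: x_def w_def algebra_simps)
    then have "dist x (cc k) = (1 - \<tau> * \<kappa>) * R k"
      using nw \<open>\<tau> * \<kappa> < 1\<close> by (simp add: dist_norm)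
    ultimately have "R k \<le> (1 - \<tau> * \<kappa>) * R k" using e(2) \<open>\<tau> * \<kappa> * R k < e\<close> by auto
    moreover have "0 < \<tau> * \<kappa> * R k" using \<open>0 < \<tau>\<close> \<open>0 < \<kappa>\<close> Rk by simp
    ultimately show False by (simp add: algebra_simps)
  qed
  moreover have "\<theta> - cc k = (1 - \<kappa>) *\<^sub>R w"
    using v by (simp add: w_def algebra_simps)
  ultimately show ?thesis by (intro exI[of _ "1 - \<kappa>"]) (simp add: w_def)
qed

lemma return_set_facts:
  assumes k: "k \<in> {1..b}" and \<theta>: "\<theta> \<in> return_set L a r b cc A Gbox k"
  defines "z \<equiv> radial_proj (cc k) (R k) \<theta>"
  shows "\<theta> \<in> S" "R k < dist \<theta> (cc k)" "z \<in> A k" "z \<notin> Cor"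
    "closed_segment \<theta> z \<inter> Fr \<subseteq> {z}" "0 \<le> (cc k - \<theta>) \<bullet> (\<theta> - cD)"
proof -
  obtain z' s where \<theta>S: "\<theta> \<in> S" and z': "z' \<in> A k" "z' \<notin> Cor" "z' \<noteq> \<theta>"
    and seg: "open_segment \<theta> z' \<subseteq> cell Gbox L r - cell_boundary Gbox L r"
    and s: "0 < s" "\<theta> - z' = s *\<^sub>R reflect (z' - cc k) (z' - \<theta>)"
    using \<theta> unfolding return_set_def returns_after_one_reflection_def by blast
  obtain \<mu> where \<mu>: "1 < \<mu>" "\<theta> - cc k = \<mu> *\<^sub>R (z' - cc k)"
    using return_point_beyond_arc[OF k z'(1,3) _ s] seg by (auto simp: cell_def)
  have Rk: "0 < R k" using R_pos[OF k] .
  have d: "dist \<theta> (cc k) = \<mu> * R k"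
    using \<mu> dist_arc_centre[OF k z'(1)] by (simp add: dist_norm)
  show "\<theta> \<in> S" by (fact \<theta>S)
  show "R k < dist \<theta> (cc k)" using d \<mu>(1) Rk by simp
  have "z = z'" using d \<mu> Rk by (simp add: z_def radial_proj_def)
  then show "z \<in> A k" "z \<notin> Cor" using z' by simp_all
  have "\<theta> \<notin> Fr" using sphere_notin_frontier[OF \<theta>S] .
  moreover have "open_segment \<theta> z \<inter> Fr = {}"
    using seg \<open>z = z'\<close> by (auto simp: cell_boundary_def)
  ultimately show "closed_segment \<theta> z \<inter> Fr \<subseteq> {z}"
    by (auto simp: closed_segment_eq_open)
  have "open_segment \<theta> z \<inter> ball cD r = {}" using seg \<open>z = z'\<close> by (auto simp: cell_def)
  then have "0 \<le> (z - \<theta>) \<bullet> (\<theta> - cD)"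
    using inner_nonneg_if_segment_avoids_ball[of cD \<theta> r z] \<theta>S z'(3) \<open>z = z'\<close> by simp
  moreover have "z - \<theta> = (1 - 1 / \<mu>) *\<^sub>R (cc k - \<theta>)"
  proof -
    have "z - cc k = (1 / \<mu>) *\<^sub>R (\<theta> - cc k)" using \<mu> \<open>z = z'\<close> by simp
    then show ?thesis by (simp add: algebra_simps)
  qed
  moreover have "0 < 1 - 1 / \<mu>" using \<mu>(1) by simp
  ultimately show "0 \<le> (cc k - \<theta>) \<bullet> (\<theta> - cD)" by (simp add: zero_le_mult_iff)
qed

lemma illuminated_neighbourhood:
  assumes "\<theta> \<in> illuminated L a r b cc A Gbox k"
  shows "\<exists>\<rho>>0. \<forall>\<theta>'\<in>S. dist \<theta>' \<theta> < \<rho> \<longrightarrow> \<theta>' \<in> return_set L a r b cc A Gbox k"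
proof -
  obtain U where "openin (top_of_set S) U" "U \<subseteq> return_set L a r b cc A Gbox k" "\<theta> \<in> U"
    using assms unfolding illuminated_def Let_def by blast
  then show ?thesis unfolding openin_euclidean_subtopology_iff by blast
qed

subsection \<open>Bounces near a point of the circle\<close>

text \<open>Near \<theta>0 all returning rays satisfy (c_k - \<theta>) \<bullet> (\<theta> - cD) \<ge> 0, that is
  (c_k - cD) \<bullet> (\<theta> - cD) \<ge> r^2. Were this an equality at \<theta>0, the linear function
  \<theta> \<mapsto> (c_k - cD) \<bullet> (\<theta> - cD) would have a local minimum on the circle at \<theta>0 with the positive
  value r^2; but a linear function on a circle is never positive at a local minimum.\<close>
lemma return_interior_outward:
  assumes k: "k \<in> {1..b}" and \<theta>0: "\<theta>0 \<in> S"
    and \<rho>: "0 < \<rho>" "\<forall>\<theta>\<in>S. dist \<theta> \<theta>0 < \<rho> \<longrightarrow> \<theta> \<in> return_set L a r b cc A Gbox k"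
  shows "0 < (cc k - \<theta>0) \<bullet> (\<theta>0 - cD)"
proof -
  define v d where "v = \<theta>0 - cD" and "d = cc k - cD"
  define th where "th t = cD + rotate t v" for t
  have vv: "v \<bullet> v = r * r" using \<theta>0 by (simp add: v_def dot_square_norm dist_norm norm_minus_commute power2_eq_square)
  have "th t \<in> S" for t using \<theta>0 by (simp add: th_def dist_norm v_def norm_minus_commute)
  have "isCont th 0" unfolding th_def by (intro continuous_intros)
  then obtain \<rho>1 where \<rho>1: "0 < \<rho>1" "\<forall>t. dist t 0 < \<rho>1 \<longrightarrow> dist (th t) (th 0) < \<rho>"
    using \<rho>(1) unfolding continuous_at_eps_delta by blast
  have "th 0 = \<theta>0" by (simp add: th_def v_def)
  have key: "(cc k - th t) \<bullet> (th t - cD) = cos t * (d \<bullet> v) + sin t * cross v d - v \<bullet> v" for t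
  proof -
    have "(cc k - th t) \<bullet> (th t - cD) = d \<bullet> rotate t v - rotate t v \<bullet> rotate t v"
      by (simp add: th_def d_def algebra_simps)
    also have "\<dots> = cos t * (d \<bullet> v) + sin t * cross v d - v \<bullet> v"
      by (simp only: dot_square_norm norm_rotate inner_rotate)
    finally show ?thesis .
  qed
  have ge: "0 \<le> cos t * (d \<bullet> v) + sin t * cross v d - v \<bullet> v" if "\<bar>t\<bar> < \<rho>1" for t
    using return_set_facts(6)[OF k] \<rho>(2) \<rho>1(2) \<open>th 0 = \<theta>0\<close> \<open>\<And>t. th t \<in> S\<close> that key
    by (metis dist_real_def diff_zero)
  have "d \<bullet> v \<noteq> v \<bullet> v"
  proof
    assume dv: "d \<bullet> v = v \<bullet> v"
    define t where "t = min (\<rho>1 / 2) 1"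
    have t: "0 < t" "t < \<rho>1" "t \<le> 1" using \<rho>1(1) by (auto simp: t_def)
    have "0 \<le> (cos t - 1) * (v \<bullet> v)"
      using ge[of t] ge[of "- t"] t dv by (simp add: algebra_simps)
    moreover have "cos t < cos 0" using t pi_ge_two by (intro cos_monotone_0_pi) auto
    moreover have "0 < v \<bullet> v" using vv r_pos by simp
    ultimately show False by (simp add: zero_le_mult_iff)
  qed
  moreover have "v \<bullet> v \<le> d \<bullet> v" using ge[of 0] \<rho>1(1) by simp
  ultimately have "0 < d \<bullet> v - v \<bullet> v" by simp
  also have "d \<bullet> v - v \<bullet> v = (cc k - \<theta>0) \<bullet> (\<theta>0 - cD)"
    by (simp add: v_def d_def inner_diff_left inner_diff_right inner_commute)
  finally show ?thesis .
qed

lemma segment_frontier_stable: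
  assumes k: "k \<in> {1..b}" and \<delta>: "0 < \<delta>" "ball z0 \<delta> \<inter> other_pieces k = {}"
    and fr0: "closed_segment \<theta>0 z0 \<inter> Fr \<subseteq> {z0}"
  shows "\<exists>\<epsilon>>0. \<forall>\<theta> z. dist \<theta> \<theta>0 < \<epsilon> \<longrightarrow> dist z z0 < \<epsilon> \<longrightarrow> z \<in> A k \<longrightarrow>
           0 < (\<theta> - z) \<bullet> (z - cc k) \<longrightarrow> closed_segment \<theta> z \<inter> Fr \<subseteq> {z}"
proof -
  define K where "K = closed_segment \<theta>0 z0 - ball z0 (\<delta> / 2)"
  have "compact K" unfolding K_def by (intro compact_diff compact_segment open_ball)
  moreover have "K \<inter> Fr = {}" using fr0 \<delta>(1) by (auto simp: K_def)
  ultimately obtain \<eta> where \<eta>: "0 < \<eta>" "\<forall>x\<in>K. \<forall>y\<in>Fr. \<eta> \<le> dist x y"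
    using separate_compact_closed[OF _ frontier_closed] by metis
  define \<epsilon> where "\<epsilon> = min (\<delta> / 2) \<eta>"
  have "closed_segment \<theta> z \<inter> Fr \<subseteq> {z}"
    if d: "dist \<theta> \<theta>0 < \<epsilon>" "dist z z0 < \<epsilon>" and z: "z \<in> A k" and inc: "0 < (\<theta> - z) \<bullet> (z - cc k)"
    for \<theta> z
  proof (rule subsetI, rule ccontr)
    fix y assume y: "y \<in> closed_segment \<theta> z \<inter> Fr" "y \<notin> {z}"
    obtain s where s: "0 \<le> s" "s \<le> 1" "y = (1 - s) *\<^sub>R \<theta> + s *\<^sub>R z"
      using y(1) by (auto simp: in_segment)
    have "s \<noteq> 1" using s y(2) by auto
    define y0 where "y0 = (1 - s) *\<^sub>R \<theta>0 + s *\<^sub>R z0"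
    have "y0 \<in> closed_segment \<theta>0 z0" using s by (auto simp: y0_def in_segment)
    have "dist y y0 < \<epsilon>" unfolding s(3) y0_def by (rule dist_convex_comb_less[OF s(1,2) d])
    show False
    proof (cases "y0 \<in> K")
      case True
      then show False using \<eta>(2) y(1) \<open>dist y y0 < \<epsilon>\<close> by (force simp: \<epsilon>_def dist_commute)
    next
      case False
      then have "dist z0 y < \<delta>"
        using \<open>y0 \<in> closed_segment \<theta>0 z0\<close> \<open>dist y y0 < \<epsilon>\<close> dist_triangle[of z0 y y0]
        by (auto simp: K_def \<epsilon>_def dist_commute)
      then have "y \<notin> other_pieces k" using \<delta>(2) by auto
      then have "y \<in> A k" using frontier_minus_other_pieces[OF k] y(1) by blast
      then have "dist y (cc k) = dist z (cc k)" using dist_arc_centre[OF k] z by simp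
      moreover have "y - cc k = (z - cc k) + (1 - s) *\<^sub>R (\<theta> - z)"
        using s(3) by (simp add: algebra_simps)
      moreover have "norm (z - cc k) < norm ((z - cc k) + (1 - s) *\<^sub>R (\<theta> - z))"
        using inc s(2) \<open>s \<noteq> 1\<close> by (intro norm_add_scaleR_gt) auto
      ultimately show False by (simp add: dist_norm)
    qed
  qed
  moreover have "0 < \<epsilon>" using \<delta>(1) \<eta>(1) by (simp add: \<epsilon>_def)
  ultimately show ?thesis by blast
qed

lemma legs_near:
  assumes k: "k \<in> {1..b}" and \<theta>0: "\<theta>0 \<in> S" and z0: "z0 \<in> A k" "z0 \<notin> Cor"
    and fr0: "closed_segment \<theta>0 z0 \<inter> Fr \<subseteq> {z0}"
    and out: "0 < (z0 - \<theta>0) \<bullet> (\<theta>0 - cD)" and inc: "0 < (\<theta>0 - z0) \<bullet> (z0 - cc k)"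
  shows "\<exists>\<epsilon>>0. \<forall>\<theta>\<in>S. \<forall>z\<in>A k. dist \<theta> \<theta>0 < \<epsilon> \<longrightarrow> dist z z0 < \<epsilon> \<longrightarrow>
           leg \<theta> z \<and> 0 < (\<theta> - z) \<bullet> (z - cc k)"
proof -
  obtain e1 where e1: "0 < e1" "\<forall>\<theta> z. dist \<theta> \<theta>0 < e1 \<longrightarrow> dist z z0 < e1 \<longrightarrow> 0 < (z - \<theta>) \<bullet> (\<theta> - cD)"
    using isCont_pos_near_pair[of \<theta>0 z0 "\<lambda>p. (snd p - fst p) \<bullet> (fst p - cD)"] out
    by (auto intro!: continuous_intros)
  obtain e2 where e2: "0 < e2" "\<forall>\<theta> z. dist \<theta> \<theta>0 < e2 \<longrightarrow> dist z z0 < e2 \<longrightarrow> 0 < (\<theta> - z) \<bullet> (z - cc k)"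
    using isCont_pos_near_pair[of \<theta>0 z0 "\<lambda>p. (fst p - snd p) \<bullet> (snd p - cc k)"] inc
    by (auto intro!: continuous_intros)
  have "z0 \<notin> other_pieces k" using arc_point_in_corners_iff[OF k z0(1)] z0(2) by simp
  then obtain \<delta> where \<delta>: "0 < \<delta>" "ball z0 \<delta> \<inter> other_pieces k = {}"
    using closed_other_pieces[of k] unfolding closed_def open_contains_ball by blast
  obtain e3 where e3: "0 < e3" "\<forall>\<theta> z. dist \<theta> \<theta>0 < e3 \<longrightarrow> dist z z0 < e3 \<longrightarrow> z \<in> A k \<longrightarrow>
      0 < (\<theta> - z) \<bullet> (z - cc k) \<longrightarrow> closed_segment \<theta> z \<inter> Fr \<subseteq> {z}"
    using segment_frontier_stable[OF k \<delta> fr0] by blast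
  define \<epsilon> where "\<epsilon> = min (min e1 e2) (min \<delta> e3)"
  have "leg \<theta> z \<and> 0 < (\<theta> - z) \<bullet> (z - cc k)"
    if "\<theta> \<in> S" "z \<in> A k" "dist \<theta> \<theta>0 < \<epsilon>" "dist z z0 < \<epsilon>" for \<theta> z
  proof
    have d: "dist \<theta> \<theta>0 < e1" "dist z z0 < e1" "dist \<theta> \<theta>0 < e2" "dist z z0 < e2"
      "dist \<theta> \<theta>0 < e3" "dist z z0 < e3" "dist z0 z < \<delta>"
      using that(3,4) by (auto simp: \<epsilon>_def dist_commute)
    show inc': "0 < (\<theta> - z) \<bullet> (z - cc k)" using e2(2) d by blast
    have "z \<notin> other_pieces k" using \<delta>(2) d by auto
    then have "z \<notin> Cor" using arc_point_in_corners_iff[OF k that(2)] by simp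
    moreover have "z \<in> Fr" using arc_subset_frontier[OF k] that(2) by blast
    moreover have "0 < (z - \<theta>) \<bullet> (\<theta> - cD)" using e1(2) d by blast
    moreover have "closed_segment \<theta> z \<inter> Fr \<subseteq> {z}" using e3(2) d that(2) inc' by blast
    ultimately show "leg \<theta> z" using leg_intro that(1) by blast
  qed
  moreover have "0 < \<epsilon>" using e1(1) e2(1) \<delta>(1) e3(1) by (simp add: \<epsilon>_def)
  ultimately show ?thesis by blast
qed

definition bounce :: "pt \<Rightarrow> pt \<Rightarrow> pt \<Rightarrow> bool" where
  "bounce \<theta>1 z \<theta>2 \<longleftrightarrow> leg \<theta>1 z \<and> leg \<theta>2 z \<and>
     (\<exists>k\<in>{1..b}. z \<in> A k \<and> (\<exists>s>0. \<theta>2 - z = s *\<^sub>R reflect (z - cc k) (z - \<theta>1)))"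

lemma legs_near_returning_ray:
  assumes k: "k \<in> {1..b}" and \<theta>0: "\<theta>0 \<in> S"
    and \<rho>: "0 < \<rho>" "\<forall>\<theta>\<in>S. dist \<theta> \<theta>0 < \<rho> \<longrightarrow> \<theta> \<in> return_set L a r b cc A Gbox k"
  defines "z0 \<equiv> radial_proj (cc k) (R k) \<theta>0"
  shows "\<exists>\<epsilon>>0. \<forall>\<theta>\<in>S. \<forall>z\<in>A k. dist \<theta> \<theta>0 < \<epsilon> \<longrightarrow> dist z z0 < \<epsilon> \<longrightarrow>
           leg \<theta> z \<and> 0 < (\<theta> - z) \<bullet> (z - cc k)"
proof -
  have "\<theta>0 \<in> return_set L a r b cc A Gbox k" using \<rho> \<theta>0 by simp
  note F0 = return_set_facts[OF k this, folded z0_def]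
  have Rk: "0 < R k" using R_pos[OF k] .
  have "z0 - \<theta>0 = (1 - R k / dist \<theta>0 (cc k)) *\<^sub>R (cc k - \<theta>0)"
    using radial_proj_minus by (simp add: z0_def)
  moreover have "0 < 1 - R k / dist \<theta>0 (cc k)" using F0(2) Rk by (simp add: divide_less_eq_1)
  ultimately have "0 < (z0 - \<theta>0) \<bullet> (\<theta>0 - cD)"
    using return_interior_outward[OF k \<theta>0 \<rho>] by simp
  moreover have "0 < (\<theta>0 - z0) \<bullet> (z0 - cc k)"
    using radial_proj_inner_pos[OF Rk F0(2)] by (simp add: z0_def)
  ultimately show ?thesis using legs_near[OF k \<theta>0 F0(3,4,5)] by blast
qed

lemma arc_points_along_rotation:
  assumes k: "k \<in> {1..b}" and \<theta>0: "\<theta>0 \<in> S"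
    and \<rho>: "0 < \<rho>" "\<forall>\<theta>\<in>S. dist \<theta> \<theta>0 < \<rho> \<longrightarrow> \<theta> \<in> return_set L a r b cc A Gbox k"
  defines "zt \<equiv> \<lambda>t. radial_proj (cc k) (R k) (cD + rotate t (\<theta>0 - cD))"
  shows "\<exists>\<rho>'>0. \<exists>\<epsilon>>0. \<forall>t. \<bar>t\<bar> < \<rho>' \<longrightarrow> isCont zt t \<and> zt t \<in> A k \<and>
           (\<forall>\<theta>\<in>S. dist \<theta> \<theta>0 < \<epsilon> \<longrightarrow> leg \<theta> (zt t) \<and> 0 < (\<theta> - zt t) \<bullet> (zt t - cc k))"
proof -
  define th where "th t = cD + rotate t (\<theta>0 - cD)" for t
  have "th 0 = \<theta>0" by (simp add: th_def)
  have "isCont th t" for t unfolding th_def by (intro continuous_intros)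
  then obtain \<rho>1 where \<rho>1: "0 < \<rho>1" "\<forall>t. dist t 0 < \<rho>1 \<longrightarrow> dist (th t) \<theta>0 < \<rho>"
    using \<rho>(1) \<open>th 0 = \<theta>0\<close> unfolding continuous_at_eps_delta by metis
  have ret: "th t \<in> return_set L a r b cc A Gbox k" if "\<bar>t\<bar> < \<rho>1" for t
    using \<rho>(2) \<rho>1(2) that \<theta>0 by (simp add: th_def dist_norm norm_minus_commute)
  note facts = return_set_facts[OF k ret, unfolded th_def, folded zt_def]
  have "th t \<noteq> cc k" if "\<bar>t\<bar> < \<rho>1" for t using facts(2)[OF that] R_pos[OF k] by (auto simp: th_def)
  then have zt_cont: "isCont zt t" if "\<bar>t\<bar> < \<rho>1" for t
    unfolding zt_def using that \<open>\<And>t. isCont th t\<close> by (intro continuous_intros) (auto simp: th_def)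
  obtain \<epsilon> where \<epsilon>: "0 < \<epsilon>" "\<forall>\<theta>\<in>S. \<forall>z\<in>A k. dist \<theta> \<theta>0 < \<epsilon> \<longrightarrow> dist z (zt 0) < \<epsilon> \<longrightarrow>
      leg \<theta> z \<and> 0 < (\<theta> - z) \<bullet> (z - cc k)"
    using legs_near_returning_ray[OF k \<theta>0 \<rho>] by (auto simp: zt_def)
  obtain \<rho>2 where \<rho>2: "0 < \<rho>2" "\<forall>t. dist t 0 < \<rho>2 \<longrightarrow> dist (zt t) (zt 0) < \<epsilon>"
    using zt_cont[of 0] \<rho>1(1) \<epsilon>(1) unfolding continuous_at_eps_delta by auto
  have "isCont zt t \<and> zt t \<in> A k \<and>
      (\<forall>\<theta>\<in>S. dist \<theta> \<theta>0 < \<epsilon> \<longrightarrow> leg \<theta> (zt t) \<and> 0 < (\<theta> - zt t) \<bullet> (zt t - cc k))"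
    if "\<bar>t\<bar> < min \<rho>1 \<rho>2" for t
  proof -
    have "zt t \<in> A k" using facts(3) that by (simp add: zt_def)
    moreover have "dist (zt t) (zt 0) < \<epsilon>" using \<rho>2(2) that by simp
    ultimately show ?thesis using zt_cont \<epsilon>(2) that by simp
  qed
  then show ?thesis using \<rho>1(1) \<rho>2(1) \<epsilon>(1) by (intro exI[of _ "min \<rho>1 \<rho>2"] exI[of _ \<epsilon>]) auto
qed

lemma normal_sine_changes_sign_along_rotation:
  assumes k: "k \<in> {1..b}" and \<theta>0: "\<theta>0 \<in> S"
    and \<rho>: "0 < \<rho>" "\<forall>\<theta>\<in>S. dist \<theta> \<theta>0 < \<rho> \<longrightarrow> \<theta> \<in> return_set L a r b cc A Gbox k"
  defines "zt \<equiv> \<lambda>t. radial_proj (cc k) (R k) (cD + rotate t (\<theta>0 - cD))"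
  assumes "0 < \<rho>'" "\<forall>t. \<bar>t\<bar> < \<rho>' \<longrightarrow> zt t \<in> A k"
  shows "\<exists>\<delta>>0. \<delta> < \<rho>' \<and> 0 < normal_sine (cc k) (zt \<delta>) \<theta>0 \<and> normal_sine (cc k) (zt (- \<delta>)) \<theta>0 < 0"
proof -
  define v \<beta> \<gamma> where "v = \<theta>0 - cD" and "\<beta> = cross v (cc k - cD)" and "\<gamma> = v \<bullet> (cc k - cD - v)"
  have Rk: "0 < R k" using R_pos[OF k] .
  have "0 < \<gamma>" using return_interior_outward[OF k \<theta>0 \<rho>] by (simp add: \<gamma>_def v_def inner_commute)
  then obtain \<delta> where \<delta>: "0 < \<delta>" "\<delta> < \<rho>'" "\<bar>\<beta>\<bar> * (1 - cos \<delta>) < \<gamma> * sin \<delta>"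
    using small_angle_dominates[of \<gamma> \<rho>' \<beta>] assms(6) by auto
  have sine: "\<exists>\<kappa>>0. normal_sine (cc k) (zt t) \<theta>0 = \<kappa> * ((1 - cos t) * \<beta> + sin t * \<gamma>)"
    if "\<bar>t\<bar> < \<rho>'" for t
  proof -
    have "zt t \<in> A k" using assms(7) that by blast
    then have "\<theta>0 \<noteq> zt t" using arc_subset_frontier[OF k] sphere_notin_frontier[OF \<theta>0] by blast
    have "dist (zt t) (cc k) = R k" using dist_arc_centre[OF k \<open>zt t \<in> A k\<close>] .
    then have "cD + rotate t v \<noteq> cc k" using Rk by (auto simp: zt_def v_def radial_proj_def)
    then show ?thesis
      using normal_sine_rotated[OF Rk, of cD t v] \<open>\<theta>0 \<noteq> zt t\<close> unfolding zt_def \<beta>_def \<gamma>_def v_def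
      by (auto simp: algebra_simps)
  qed
  have "\<bar>(1 - cos \<delta>) * \<beta>\<bar> = \<bar>\<beta>\<bar> * (1 - cos \<delta>)" by (simp add: abs_mult)
  then have "0 < (1 - cos \<delta>) * \<beta> + sin \<delta> * \<gamma>" "(1 - cos (- \<delta>)) * \<beta> + sin (- \<delta>) * \<gamma> < 0"
    using \<delta>(3) by (auto simp: abs_le_iff algebra_simps)
  then show ?thesis
    using sine[of \<delta>] sine[of "- \<delta>"] \<delta>(1,2) by (auto simp: mult_less_0_iff)
qed

lemma one_bounce_near:
  assumes k: "k \<in> {1..b}" and \<theta>0: "\<theta>0 \<in> S"
    and \<rho>: "0 < \<rho>" "\<forall>\<theta>\<in>S. dist \<theta> \<theta>0 < \<rho> \<longrightarrow> \<theta> \<in> return_set L a r b cc A Gbox k"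
  shows "\<exists>\<epsilon>>0. \<forall>\<theta>\<in>S. dist \<theta> \<theta>0 < \<epsilon> \<longrightarrow> (\<exists>z. bounce \<theta>0 z \<theta>)"
proof -
  define zt where "zt t = radial_proj (cc k) (R k) (cD + rotate t (\<theta>0 - cD))" for t
  obtain \<rho>' \<epsilon>v where "0 < \<rho>'" "0 < \<epsilon>v" and near: "\<And>t. \<bar>t\<bar> < \<rho>' \<Longrightarrow> isCont zt t \<and> zt t \<in> A k \<and>
      (\<forall>\<theta>\<in>S. dist \<theta> \<theta>0 < \<epsilon>v \<longrightarrow> leg \<theta> (zt t) \<and> 0 < (\<theta> - zt t) \<bullet> (zt t - cc k))"
    using arc_points_along_rotation[OF k \<theta>0 \<rho>, folded zt_def] by metis
  then obtain \<delta> where \<delta>: "0 < \<delta>" "\<delta> < \<rho>'"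
    and signs: "0 < normal_sine (cc k) (zt \<delta>) \<theta>0" "0 < - normal_sine (cc k) (zt (- \<delta>)) \<theta>0"
    using normal_sine_changes_sign_along_rotation[OF k \<theta>0 \<rho>, folded zt_def, of \<rho>'] by auto
  then have near\<delta>: "isCont zt t \<and> zt t \<in> A k \<and>
      (\<forall>\<theta>\<in>S. dist \<theta> \<theta>0 < \<epsilon>v \<longrightarrow> leg \<theta> (zt t) \<and> 0 < (\<theta> - zt t) \<bullet> (zt t - cc k))"
    if "t \<in> {-\<delta>..\<delta>}" for t
    using near that by auto
  have off: "\<theta>0 \<noteq> zt t" if "t \<in> {-\<delta>..\<delta>}" for t
    using near\<delta>[OF that] arc_subset_frontier[OF k] sphere_notin_frontier[OF \<theta>0] by blast
  have cont: "isCont (\<lambda>\<theta>. normal_sine (cc k) (zt t) \<theta>) \<theta>0"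
    "isCont (\<lambda>\<theta>. - normal_sine (cc k) (zt t) \<theta>) \<theta>0" if "t \<in> {-\<delta>..\<delta>}" for t
    using off[OF that] unfolding normal_sine_def cross_def by (auto intro!: continuous_intros)
  have "\<delta> \<in> {-\<delta>..\<delta>}" "- \<delta> \<in> {-\<delta>..\<delta>}" using \<delta>(1) by auto
  then obtain \<epsilon>p \<epsilon>n where
    \<epsilon>p: "0 < \<epsilon>p" "\<forall>\<theta>. dist \<theta> \<theta>0 < \<epsilon>p \<longrightarrow> 0 < normal_sine (cc k) (zt \<delta>) \<theta>" and
    \<epsilon>n: "0 < \<epsilon>n" "\<forall>\<theta>. dist \<theta> \<theta>0 < \<epsilon>n \<longrightarrow> 0 < - normal_sine (cc k) (zt (- \<delta>)) \<theta>"
    using isCont_pos_near[OF cont(1) signs(1)] isCont_pos_near[OF cont(2) signs(2)] by blast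
  have "\<exists>z. bounce \<theta>0 z \<theta>" if \<theta>: "\<theta> \<in> S" "dist \<theta> \<theta>0 < min \<epsilon>v (min \<epsilon>p \<epsilon>n)" for \<theta>
  proof -
    have "continuous_on {-\<delta>..\<delta>} zt"
      using near\<delta> by (intro continuous_at_imp_continuous_on) auto
    moreover have "0 < normal_sine (cc k) (zt \<delta>) \<theta>" "0 < - normal_sine (cc k) (zt (- \<delta>)) \<theta>"
      using \<epsilon>p(2) \<epsilon>n(2) \<theta>(2) by (meson min_less_iff_conj)+
    moreover have legs: "leg \<theta>0 (zt t) \<and> 0 < (\<theta>0 - zt t) \<bullet> (zt t - cc k) \<and>
        leg \<theta> (zt t) \<and> 0 < (\<theta> - zt t) \<bullet> (zt t - cc k)" if "t \<in> {-\<delta>..\<delta>}" for t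
      using near\<delta>[OF that] \<theta> \<theta>0 \<open>0 < \<epsilon>v\<close> by simp
    ultimately obtain t s where "t \<in> {-\<delta>..\<delta>}" "0 < s"
      "\<theta> - zt t = s *\<^sub>R reflect (zt t - cc k) (zt t - \<theta>0)"
      using reflection_point_between[of "- \<delta>" \<delta> zt \<theta>0 "cc k" \<theta>] \<delta>(1) signs by force
    then show ?thesis using legs near\<delta> k unfolding bounce_def by blast
  qed
  moreover have "0 < min \<epsilon>v (min \<epsilon>p \<epsilon>n)" using \<open>0 < \<epsilon>v\<close> \<epsilon>p(1) \<epsilon>n(1) by simp
  ultimately show ?thesis by blast
qed

subsection \<open>Chains of bounces and the admissible path\<close>

lemma bounce_sym:
  assumes "bounce \<theta>1 z \<theta>2" shows "bounce \<theta>2 z \<theta>1"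
proof -
  obtain k s where k: "k \<in> {1..b}" "z \<in> A k" and s: "0 < s"
    "\<theta>2 - z = s *\<^sub>R reflect (z - cc k) (z - \<theta>1)"
    using assms unfolding bounce_def by blast
  have "z - cc k \<noteq> 0" using dist_arc_centre[OF k] R_pos[OF k(1)] by auto
  have "z - \<theta>2 = reflect (z - cc k) ((- s) *\<^sub>R (z - \<theta>1))"
    unfolding reflect_scaleR by (metis s(2) minus_diff_eq scaleR_minus_left)
  then have "reflect (z - cc k) (z - \<theta>2) = (- s) *\<^sub>R (z - \<theta>1)"
    using reflect_reflect[OF \<open>z - cc k \<noteq> 0\<close>] by simp
  then have "(1 / s) *\<^sub>R reflect (z - cc k) (z - \<theta>2) = \<theta>1 - z"
    using s(1) by simp
  then show ?thesis using assms k s(1) unfolding bounce_def by (metis divide_pos_pos zero_less_one)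
qed

lemma linked_on_sphere:
  assumes oc: "one_controllable L a r b cc A Gbox" and "\<theta>1 \<in> S" "\<theta>2 \<in> S"
  shows "(\<lambda>\<theta> \<theta>'. \<exists>z. bounce \<theta> z \<theta>')\<^sup>*\<^sup>* \<theta>1 \<theta>2"
proof (rule connected_equivalence_relation[of S])
  show "connected S" by (simp add: connected_sphere)
  show "\<theta>1 \<in> S" "\<theta>2 \<in> S" by (fact assms(2), fact assms(3))
  have sym: "symp (\<lambda>\<theta> \<theta>'. \<exists>z. bounce \<theta> z \<theta>')" by (auto intro: sympI bounce_sym)
  show "\<And>x y. (\<lambda>\<theta> \<theta>'. \<exists>z. bounce \<theta> z \<theta>')\<^sup>*\<^sup>* x y \<Longrightarrow> (\<lambda>\<theta> \<theta>'. \<exists>z. bounce \<theta> z \<theta>')\<^sup>*\<^sup>* y x"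
    by (rule sympD[OF symp_rtranclp[OF sym]])
  show "\<And>x y z. (\<lambda>\<theta> \<theta>'. \<exists>z. bounce \<theta> z \<theta>')\<^sup>*\<^sup>* x y \<Longrightarrow> (\<lambda>\<theta> \<theta>'. \<exists>z. bounce \<theta> z \<theta>')\<^sup>*\<^sup>* y z
      \<Longrightarrow> (\<lambda>\<theta> \<theta>'. \<exists>z. bounce \<theta> z \<theta>')\<^sup>*\<^sup>* x z"
    by (rule rtranclp_trans)
  fix \<theta> assume \<theta>: "\<theta> \<in> S"
  then obtain k where k: "k \<in> {1..b}" "\<theta> \<in> illuminated L a r b cc A Gbox k"
    using oc unfolding one_controllable_def by blast
  obtain \<rho> where "0 < \<rho>" "\<forall>\<theta>'\<in>S. dist \<theta>' \<theta> < \<rho> \<longrightarrow> \<theta>' \<in> return_set L a r b cc A Gbox k"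
    using illuminated_neighbourhood[OF k(2)] by blast
  then obtain \<epsilon> where \<epsilon>: "0 < \<epsilon>" "\<forall>\<theta>'\<in>S. dist \<theta>' \<theta> < \<epsilon> \<longrightarrow> (\<exists>z. bounce \<theta> z \<theta>')"
    using one_bounce_near[OF k(1) \<theta>] by blast
  show "\<exists>T. openin (top_of_set S) T \<and> \<theta> \<in> T \<and> (\<forall>\<theta>'\<in>T. (\<lambda>\<theta> \<theta>'. \<exists>z. bounce \<theta> z \<theta>')\<^sup>*\<^sup>* \<theta> \<theta>')"
    using \<theta> \<epsilon> by (intro exI[of _ "S \<inter> ball \<theta> \<epsilon>"]) (auto simp: openin_open_Int dist_commute)
qed

definition bounce_chain :: "(nat \<Rightarrow> pt) \<Rightarrow> nat \<Rightarrow> bool" where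
  "bounce_chain q m \<longleftrightarrow> (\<forall>j<m. bounce (q (2 * j)) (q (2 * j + 1)) (q (2 * j + 2)))"

lemma bounce_chain_if_linked:
  assumes "(\<lambda>\<theta> \<theta>'. \<exists>z. bounce \<theta> z \<theta>')\<^sup>*\<^sup>* \<theta>1 \<theta>2"
  shows "\<exists>q m. q 0 = \<theta>1 \<and> q (2 * m) = \<theta>2 \<and> bounce_chain q m"
  using assms
proof (induction rule: rtranclp_induct)
  case base
  show ?case by (intro exI[of _ "\<lambda>_. \<theta>1"] exI[of _ 0]) (simp add: bounce_chain_def)
next
  case (step \<theta> \<theta>')
  then obtain q m z where q: "q 0 = \<theta>1" "q (2 * m) = \<theta>" "bounce_chain q m" and "bounce \<theta> z \<theta>'"
    by blast
  define q' where "q' = q(2 * m + 1 := z, 2 * m + 2 := \<theta>')"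
  have "bounce (q' (2 * j)) (q' (2 * j + 1)) (q' (2 * j + 2))" if "j < Suc m" for j
  proof (cases "j = m")
    case True
    then show ?thesis using \<open>bounce \<theta> z \<theta>'\<close> q(2) by (simp add: q'_def)
  next
    case False
    then show ?thesis using q(3) that by (simp add: q'_def bounce_chain_def)
  qed
  then have "bounce_chain q' (Suc m)" unfolding bounce_chain_def by blast
  moreover have "q' 0 = \<theta>1" "q' (2 * Suc m) = \<theta>'" by (simp_all add: q'_def q(1))
  ultimately show ?case by blast
qed

definition clear_segment :: "pt \<Rightarrow> pt \<Rightarrow> bool" where
  "clear_segment x y \<longleftrightarrow> x \<noteq> y \<and> closed_segment x y \<subseteq> cell Gbox L r \<and>
     closed_segment x y \<inter> Cor = {} \<and> \<not> tangent_to_disk L r x y"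

lemma leg_clear_segment:
  assumes "leg \<theta> z" shows "clear_segment \<theta> z" "clear_segment z \<theta>"
  using leg_facts[OF assms] tangent_to_disk_commute[of L r \<theta> z]
  unfolding clear_segment_def by (auto simp: closed_segment_commute)

lemma bounce_legs_avoid_openings:
  assumes "bounce \<theta>1 z \<theta>2"
  shows "closed_segment \<theta>1 z \<inter> Opn = {}" "closed_segment \<theta>2 z \<inter> Opn = {}"
proof -
  obtain k where k: "k \<in> {1..b}" "z \<in> A k" and legs: "leg \<theta>1 z" "leg \<theta>2 z"
    using assms unfolding bounce_def by blast
  have "z \<notin> other_pieces k" using arc_point_in_corners_iff[OF k] leg_facts(3)[OF legs(1)] by blast
  then have "z \<notin> Opn" using openings_subset_other_pieces[OF k(1)] by blast
  then show "closed_segment \<theta>1 z \<inter> Opn = {}" "closed_segment \<theta>2 z \<inter> Opn = {}"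
    using leg_facts(7)[OF legs(1)] leg_facts(7)[OF legs(2)] by blast+
qed

lemma bounce_chain_segment:
  assumes "bounce_chain q m" "1 \<le> i" "i \<le> 2 * m"
  shows "clear_segment (q (i - 1)) (q i) \<and> closed_segment (q (i - 1)) (q i) \<inter> Opn = {}"
proof -
  have "\<exists>j. j < m \<and> (i = 2 * j + 1 \<or> i = 2 * j + 2)" using assms(2,3) by presburger
  then obtain j where j: "j < m" "i = 2 * j + 1 \<or> i = 2 * j + 2" by blast
  then have b: "bounce (q (2 * j)) (q (2 * j + 1)) (q (2 * j + 2))"
    using assms(1) unfolding bounce_chain_def by blast
  from j(2) show ?thesis
  proof
    assume "i = 2 * j + 1"
    then show ?thesis using b bounce_legs_avoid_openings(1)[OF b] leg_clear_segment(1)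
      unfolding bounce_def by simp
  next
    assume "i = 2 * j + 2"
    then show ?thesis using b bounce_legs_avoid_openings(2)[OF b] leg_clear_segment(2)
      unfolding bounce_def by (simp add: closed_segment_commute)
  qed
qed

lemma bounce_chain_on_sphere:
  assumes "leg (q 0) z0" "bounce_chain q m" "j \<le> m"
  shows "q (2 * j) \<in> S"
proof (cases j)
  case 0
  then show ?thesis using leg_facts(1)[OF assms(1)] by simp
next
  case (Suc j')
  then have "bounce (q (2 * j')) (q (2 * j' + 1)) (q (2 * j' + 2))"
    using assms(2,3) unfolding bounce_chain_def by simp
  then have "leg (q (2 * j)) (q (2 * j' + 1))" using Suc unfolding bounce_def by simp
  then show ?thesis by (rule leg_facts(1))
qed

definition chain_path :: "pt \<Rightarrow> (nat \<Rightarrow> pt) \<Rightarrow> nat \<Rightarrow> pt \<Rightarrow> nat \<Rightarrow> pt" where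
  "chain_path z0 q m z1 i = (if i = 0 then z0 else if i \<le> 2 * m + 1 then q (i - 1) else z1)"

lemma chain_path_segment:
  assumes first: "leg (q 0) z0" and last: "leg (q (2 * m)) z1" and chain: "bounce_chain q m"
    and i: "i < 2 * m + 2"
  defines "p \<equiv> chain_path z0 q m z1"
  shows "clear_segment (p i) (p (Suc i)) \<and> (\<forall>x\<in>closed_segment (p i) (p (Suc i)).
      x \<in> Opn \<longrightarrow> (i = 0 \<and> x = p 0) \<or> (i = 2 * m + 1 \<and> x = p (2 * m + 2)))"
proof -
  consider "i = 0" | "i = 2 * m + 1" | "1 \<le> i" "i \<le> 2 * m" using i by linarith
  then show ?thesis
  proof cases
    case 1
    then show ?thesis using leg_clear_segment(2)[OF first] leg_facts(7)[OF first]
      by (auto simp: p_def chain_path_def closed_segment_commute)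
  next
    case 2
    then show ?thesis using leg_clear_segment(1)[OF last] leg_facts(7)[OF last]
      by (auto simp: p_def chain_path_def)
  next
    case 3
    then show ?thesis using bounce_chain_segment[OF chain 3] by (auto simp: p_def chain_path_def)
  qed
qed

lemma chain_path_vertex:
  fixes z1 :: pt
  assumes first: "leg (q 0) z0" and chain: "bounce_chain q m" and i: "0 < i" "i < 2 * m + 2"
  defines "p \<equiv> chain_path z0 q m z1"
  shows "p i \<in> cell_boundary Gbox L r \<and> (p i \<in> Fr \<longrightarrow> (\<exists>k\<in>{1..b}. p i \<in> A k \<and>
      (\<exists>s>0. p (Suc i) - p i = s *\<^sub>R reflect (p i - cc k) (p i - p (i - 1)))))"
proof -
  have "\<exists>j. (i = 2 * j + 1 \<and> j \<le> m) \<or> (i = 2 * j + 2 \<and> j < m)" using i by presburger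
  then obtain j where "(i = 2 * j + 1 \<and> j \<le> m) \<or> (i = 2 * j + 2 \<and> j < m)" by blast
  then show ?thesis
  proof
    assume "i = 2 * j + 1 \<and> j \<le> m"
    then have "p i \<in> S"
      using bounce_chain_on_sphere[OF first chain] by (simp add: p_def chain_path_def)
    then show ?thesis using sphere_notin_frontier by (simp add: cell_boundary_def)
  next
    assume "i = 2 * j + 2 \<and> j < m"
    then have "bounce (p (i - 1)) (p i) (p (Suc i))"
      using chain unfolding bounce_chain_def by (simp add: p_def chain_path_def)
    moreover have "p i \<in> Fr" using leg_facts(2) calculation unfolding bounce_def by blast
    ultimately show ?thesis unfolding bounce_def cell_boundary_def by auto
  qed
qed

lemma admissible_chain_path:
  assumes "leg (q 0) z0" "leg (q (2 * m)) z1" "bounce_chain q m"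
  shows "admissible_path L a r b cc A Gbox (chain_path z0 q m z1) (2 * m + 2)"
  unfolding admissible_path_def
  using chain_path_segment[OF assms] chain_path_vertex[OF assms(1,3)]
  by (simp add: clear_segment_def)

end

theorem corollary1:
  fixes L a r :: real and b :: nat and cc :: "nat \<Rightarrow> real \<times> real" and R :: "nat \<Rightarrow> real"
    and A :: "nat \<Rightarrow> (real \<times> real) set" and Gbox :: "(real \<times> real) set"
  assumes "is_cell L a r b cc R A Gbox"
    and "one_controllable L a r b cc A Gbox"
  shows "\<exists>p n. admissible_path L a r b cc A Gbox p n \<and>
           p 0 = (0, 0) \<and> p n = (L, 0) \<and>
           snd (p 1) = 0 \<and> snd (p (n - 1)) = 0"
proof -
  interpret cell_geometry L a r b cc R A Gbox by (fact cell_geometry.intro[OF assms(1)])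
  define \<theta>L \<theta>R where "\<theta>L = radial_proj cD r (0, 0)" and "\<theta>R = radial_proj cD r (L, 0)"
  have legs: "leg \<theta>L (0, 0)" "leg \<theta>R (L, 0)"
    unfolding \<theta>L_def \<theta>R_def using leg_radial_proj opening_centres by simp_all
  obtain q m where q: "q 0 = \<theta>L" "q (2 * m) = \<theta>R" "bounce_chain q m"
    using bounce_chain_if_linked[OF linked_on_sphere[OF assms(2)]] leg_facts(1)[OF legs(1)]
      leg_facts(1)[OF legs(2)] by blast
  have "admissible_path L a r b cc A Gbox (chain_path (0, 0) q m (L, 0)) (2 * m + 2)"
    using admissible_chain_path legs q by simp
  moreover have "snd \<theta>L = 0" "snd \<theta>R = 0"
    by (simp_all add: \<theta>L_def \<theta>R_def radial_proj_def disk_center_def)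
  ultimately show ?thesis
    using q by (intro exI[of _ "chain_path (0, 0) q m (L, 0)"] exI[of _ "2 * m + 2"])
      (simp add: chain_path_def)
qed

end
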